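(* Let $m,n\geq 2$ be integers with $m\mid n$. Let $E_n=(A^{(n)}\#C_n)/(e_0)$ and $E_m=(A^{(m)}\#C_m)/(e_0)$. Then $\operatorname{GKdim}E_n\geq\operatorname{GKdim}E_m$; equivalently $n-\mathrm{p}(A^{(n)},C_n)\geq m-\mathrm{p}(A^{(m)},C_m)$.
   Context: $\Bbbk$ is an algebraically closed field of characteristic zero. For $k\ge2$, $A^{(k)}=\Bbbk_{-1}[x_0,\dots,x_{k-1}]$ is the algebra generated by degree-one $x_0,\dots,x_{k-1}$ with $x_ix_j=-x_jx_i$ ($i\ne j$), with the cyclic group $C_k=\langle\sigma\rangle$ acting by $\sigma(x_i)=x_{i+1}$ (indices in $\mathbb{Z}_k$). In the skew group algebra $A^{(k)}\#C_k$, $e_0=1\#\frac1k\sum_{g\in C_k}g$ and $(e_0)$ is the two-sided ideal it generates; $\mathrm{p}(A^{(k)},C_k)=k-\operatorname{GKdim}\big((A^{(k)}\#C_k)/(e_0)\big)$. *)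

theory Defs
  imports "HOL-Library.Extended_Real" "HOL-Library.Liminf_Limsup"
          "HOL-Computational_Algebra.Polynomial"
begin

text \<open>Concrete model of the skew group algebra A^(k) # C_k, where
  A^(k) = k_{-1}[x_0,...,x_{k-1}].  A basis element (a, g) stands for
  x_0^(a 0) x_1^(a 1) ... x_(k-1)^(a (k-1)) # sigma^g  (standard ordered monomial),
  with a supported on {..<k} and g < k.\<close>

type_synonym mon = "(nat \<Rightarrow> nat) \<times> nat"

definition Bk :: "nat \<Rightarrow> mon set" where
  "Bk k = {(a, g). (\<forall>i\<ge>k. a i = 0) \<and> g < k}"

definition supp :: "(mon \<Rightarrow> 'a::zero) \<Rightarrow> mon set" where
  "supp f = {p. f p \<noteq> 0}"

definition Alg :: "nat \<Rightarrow> (mon \<Rightarrow> 'a::zero) set" where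
  "Alg k = {f. finite (supp f) \<and> supp f \<subseteq> Bk k}"

text \<open>sigma^g (x^b) = rot_sign k g b * x^(rot k g b), since sigma(x_i) = x_(i+1 mod k).\<close>
definition rot :: "nat \<Rightarrow> nat \<Rightarrow> (nat \<Rightarrow> nat) \<Rightarrow> (nat \<Rightarrow> nat)" where
  "rot k g b = (\<lambda>j. if j < k then b ((j + k - g mod k) mod k) else 0)"

definition rot_sign :: "nat \<Rightarrow> nat \<Rightarrow> (nat \<Rightarrow> nat) \<Rightarrow> 'a::ring_1" where
  "rot_sign k g b = (- 1) ^ (\<Sum>(i, j) \<in> {(i, j). i < j \<and> j < k \<and> (j + g) mod k < (i + g) mod k}. b i * b j)"

text \<open>x^a x^c = mono_sign k a c * x^(a + c) in k_{-1}[x_0..x_{k-1}].\<close>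
definition mono_sign :: "nat \<Rightarrow> (nat \<Rightarrow> nat) \<Rightarrow> (nat \<Rightarrow> nat) \<Rightarrow> 'a::ring_1" where
  "mono_sign k a c = (- 1) ^ (\<Sum>(i, j) \<in> {(i, j). j < i \<and> i < k}. a i * c j)"

text \<open>(x^a # sigma^g)(x^b # sigma^h) = x^a sigma^g(x^b) # sigma^(g+h).\<close>
definition bmon :: "nat \<Rightarrow> mon \<Rightarrow> mon \<Rightarrow> mon" where
  "bmon k p q = (case p of (a, g) \<Rightarrow> case q of (b, h) \<Rightarrow>
      ((\<lambda>i. a i + rot k g b i), (g + h) mod k))"

definition bsign :: "nat \<Rightarrow> mon \<Rightarrow> mon \<Rightarrow> 'a::ring_1" where
  "bsign k p q = (case p of (a, g) \<Rightarrow> case q of (b, h) \<Rightarrow>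
      mono_sign k a (rot k g b) * rot_sign k g b)"

definition mul :: "nat \<Rightarrow> (mon \<Rightarrow> 'a::ring_1) \<Rightarrow> (mon \<Rightarrow> 'a) \<Rightarrow> (mon \<Rightarrow> 'a)" where
  "mul k f h = (\<lambda>c. \<Sum>p\<in>supp f. \<Sum>q\<in>supp h.
      if bmon k p q = c then bsign k p q * f p * h q else 0)"

definition one :: "mon \<Rightarrow> 'a::{zero,one}" where
  "one = (\<lambda>p. if p = ((\<lambda>_. 0), 0) then 1 else 0)"

definition e0 :: "nat \<Rightarrow> (mon \<Rightarrow> 'a::field)" where
  "e0 k = (\<lambda>p. if \<exists>g<k. p = ((\<lambda>_. 0), g) then inverse (of_nat k) else 0)"

inductive_set gen_ideal :: "nat \<Rightarrow> (mon \<Rightarrow> 'a::ring_1) \<Rightarrow> (mon \<Rightarrow> 'a) set"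
  for k e where
  gen: "e \<in> gen_ideal k e"
| zero: "(\<lambda>_. 0) \<in> gen_ideal k e"
| add: "x \<in> gen_ideal k e \<Longrightarrow> y \<in> gen_ideal k e \<Longrightarrow> (\<lambda>p. x p + y p) \<in> gen_ideal k e"
| lmul: "x \<in> gen_ideal k e \<Longrightarrow> u \<in> Alg k \<Longrightarrow> mul k u x \<in> gen_ideal k e"
| rmul: "x \<in> gen_ideal k e \<Longrightarrow> u \<in> Alg k \<Longrightarrow> mul k x u \<in> gen_ideal k e"

definition lin_span :: "(mon \<Rightarrow> 'a::comm_ring_1) set \<Rightarrow> (mon \<Rightarrow> 'a) set" where
  "lin_span S = {(\<lambda>p. \<Sum>s\<in>T. c s * s p) | T c. finite T \<and> T \<subseteq> S}"

definition prodl :: "nat \<Rightarrow> (mon \<Rightarrow> 'a::ring_1) list \<Rightarrow> (mon \<Rightarrow> 'a)" where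
  "prodl k xs = foldr (mul k) xs one"

definition filt :: "nat \<Rightarrow> (mon \<Rightarrow> 'a::comm_ring_1) set \<Rightarrow> nat \<Rightarrow> (mon \<Rightarrow> 'a) set" where
  "filt k F n = lin_span {prodl k xs | xs. set xs \<subseteq> F \<and> length xs \<le> n}"

definition indep_mod :: "(mon \<Rightarrow> 'a::comm_ring_1) set \<Rightarrow> (mon \<Rightarrow> 'a) set \<Rightarrow> bool" where
  "indep_mod I S = (\<forall>c. (\<lambda>p. \<Sum>s\<in>S. c s * s p) \<in> I \<longrightarrow> (\<forall>s\<in>S. c s = 0))"

definition qdim :: "(mon \<Rightarrow> 'a::comm_ring_1) set \<Rightarrow> (mon \<Rightarrow> 'a) set \<Rightarrow> enat" where
  "qdim I W = (SUP S \<in> {S. finite S \<and> S \<subseteq> W \<and> indep_mod I S}. enat (card S))"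

definition growth :: "(nat \<Rightarrow> enat) \<Rightarrow> ereal" where
  "growth d = limsup (\<lambda>n. case d n of enat j \<Rightarrow> ereal (ln (real j) / ln (real n)) | \<infinity> \<Rightarrow> \<infinity>)"

definition GKdim_quot :: "nat \<Rightarrow> (mon \<Rightarrow> 'a::field) set \<Rightarrow> ereal" where
  "GKdim_quot k I = (SUP F \<in> {F. finite F \<and> F \<subseteq> (Alg k :: (mon \<Rightarrow> 'a) set)}.
      growth (\<lambda>n. qdim I (filt k F n)))"

definition GKdim_E :: "'a::field itself \<Rightarrow> nat \<Rightarrow> ereal" where
  "GKdim_E _ k = GKdim_quot k (gen_ideal k (e0 k :: mon \<Rightarrow> 'a))"

end

theory Submission
  imports Defs
begin

text \<open>The substitution \<open>x\<^sub>i \<mapsto> x\<^sub>d\<^sub>i\<close>, \<open>\<sigma> \<mapsto> \<sigma>\<^sup>d\<close> embeds the skew group algebra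
  for \<open>m\<close> into the one for \<open>m d\<close> as the span of the monomials \<open>x\<^sup>a \<sigma>\<^sup>g\<close> with \<open>a\<close> supported on multiples
  of \<open>d\<close> and \<open>d | g\<close>. Reading off the coefficients on this span is a left inverse of the
  embedding that maps the ideal \<open>(e\<^sub>0)\<close> of the big algebra into that of the small one: every
  sandwich \<open>x\<^sup>a \<sigma>\<^sup>g e\<^sub>0 x\<^sup>b \<sigma>\<^sup>h\<close> equals \<open>\<plusminus>x\<^sup>a e\<^sub>0 x\<^sup>b\<^sup>'\<close> for a suitable \<open>b'\<close>, and after expanding
  \<open>e\<^sub>0 = (1/n) \<Sum>\<^sub>t \<sigma>\<^sup>t\<close> the only surviving terms, those with \<open>d | t\<close> and \<open>a\<close>, \<open>b'\<close> supported
  on multiples of \<open>d\<close>, add up to \<open>1/d\<close> times the corresponding sandwich in the small algebra.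
  Hence the embedding preserves linear independence modulo \<open>(e\<^sub>0)\<close>, and since it also carries
  the filtration generated by a finite set \<open>F\<close> into the one generated by its image, every growth
  rate of \<open>E\<^sub>m\<close> is bounded by one of \<open>E\<^sub>m\<^sub>d\<close>.

  Associativity of the concrete multiplication reduces to a cocycle identity for its signs,
  which is proved as a parity statement about their exponents.\<close>

section \<open>The sign cocycle\<close>

lemma sum_pairs_below:
  fixes k :: nat
  shows "(\<Sum>(i, j)\<in>{(i, j). i < k \<and> j < k \<and> P i j}. f i j) = (\<Sum>i<k. \<Sum>j<k. if P i j then f i j else 0)"
proof -
  have "(\<Sum>(i, j)\<in>{(i, j). i < k \<and> j < k \<and> P i j}. f i j)
      = (\<Sum>(i, j)\<in>Sigma {..<k} (\<lambda>i. {j\<in>{..<k}. P i j}). f i j)"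
    by (rule sum.cong) auto
  also have "\<dots> = (\<Sum>i<k. \<Sum>j\<in>{j\<in>{..<k}. P i j}. f i j)"
    by (rule sum.Sigma[symmetric]) auto
  also have "\<dots> = (\<Sum>i<k. \<Sum>j<k. if P i j then f i j else 0)"
    by (rule sum.cong[OF refl], rule sum.inter_filter) simp
  finally show ?thesis .
qed

definition mono_exp :: "nat \<Rightarrow> (nat \<Rightarrow> nat) \<Rightarrow> (nat \<Rightarrow> nat) \<Rightarrow> nat" where
  "mono_exp k a c = (\<Sum>i<k. \<Sum>j<k. if j < i then a i * c j else 0)"

definition rot_exp :: "nat \<Rightarrow> nat \<Rightarrow> (nat \<Rightarrow> nat) \<Rightarrow> nat" where
  "rot_exp k g b = (\<Sum>i<k. \<Sum>j<k. if i < j \<and> (j + g) mod k < (i + g) mod k then b i * b j else 0)"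

lemma mono_sign_eq_power: "mono_sign k a c = (-1) ^ mono_exp k a c"
proof -
  have "{(i, j). j < i \<and> i < k} = {(i, j). i < k \<and> j < k \<and> j < i}" by auto
  then show ?thesis
    unfolding mono_sign_def mono_exp_def by (simp add: sum_pairs_below[where P = "\<lambda>i j. j < i"])
qed

lemma rot_sign_eq_power: "rot_sign k g b = (-1) ^ rot_exp k g b"
proof -
  have "{(i, j). i < j \<and> j < k \<and> (j + g) mod k < (i + g) mod k}
      = {(i, j). i < k \<and> j < k \<and> i < j \<and> (j + g) mod k < (i + g) mod k}" by auto
  then show ?thesis
    unfolding rot_sign_def rot_exp_def
    by (simp add: sum_pairs_below[where P = "\<lambda>i j. i < j \<and> (j + g) mod k < (i + g) mod k"])
qed

lemma neg_one_power_eq_if_even_add: "even (x + y) \<Longrightarrow> (-1::'a::ring_1) ^ x = (-1) ^ y"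
  by (cases "even x") (auto simp: neg_one_even_power neg_one_odd_power)

lemma shift_unshift:
  assumes "(i::nat) < k"
  shows "((i + g) mod k + k - g mod k) mod k = i"
proof -
  have r: "g mod k < k" using assms by simp
  have e: "(i + g) mod k = (i + g mod k) mod k" by (simp add: mod_add_right_eq)
  show ?thesis
  proof (cases "i + g mod k < k")
    case True
    then show ?thesis unfolding e using assms by simp
  next
    case False
    have "i + g mod k - k < k" using r assms by linarith
    moreover have "(i + g mod k) mod k = (i + g mod k - k) mod k" using False
      by (simp add: le_mod_geq)
    ultimately have "(i + g mod k) mod k = i + g mod k - k" by simp
    then show ?thesis unfolding e using assms r False by simp
  qed
qed

lemma shift_inj: "(i::nat) < k \<Longrightarrow> j < k \<Longrightarrow> (i + g) mod k = (j + g) mod k \<Longrightarrow> i = j"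
  by (metis shift_unshift[of i k g] shift_unshift[of j k g])

lemma bij_betw_shift:
  assumes "0 < (k::nat)"
  shows "bij_betw (\<lambda>i. (i + g) mod k) {..<k} {..<k}"
proof -
  have "inj_on (\<lambda>i. (i + g) mod k) {..<k}" by (auto intro: inj_onI shift_inj)
  moreover have "(\<lambda>i. (i + g) mod k) ` {..<k} \<subseteq> {..<k}" using assms by auto
  ultimately show ?thesis unfolding bij_betw_def by (simp add: endo_inj_surj)
qed

lemma sum_shift: "0 < (k::nat) \<Longrightarrow> (\<Sum>i<k. F ((i + g) mod k)) = (\<Sum>i<k. F i)"
  using sum.reindex_bij_betw[OF bij_betw_shift] by blast

lemma shift_shift: "(((x::nat) + h) mod k + g) mod k = (x + (g + h) mod k) mod k"
  by (metis add.assoc add.commute mod_add_left_eq mod_add_right_eq)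

lemma rot_shift: "(i::nat) < k \<Longrightarrow> rot k g v ((i + g) mod k) = v i"
  unfolding rot_def using shift_unshift[of i k g] by simp

lemma rot_rot: "rot k g (rot k h c) = rot k ((g + h) mod k) c"
proof
  fix j
  show "rot k g (rot k h c) j = rot k ((g + h) mod k) c j"
  proof (cases "j < k")
    case False
    then show ?thesis by (simp add: rot_def)
  next
    case True
    then obtain i where i: "i < k" "j = (i + (g + h) mod k) mod k"
      using bij_betw_shift[of k "(g + h) mod k"] by (auto simp: bij_betw_def)
    have "rot k g (rot k h c) j = rot k g (rot k h c) (((i + h) mod k + g) mod k)"
      using i shift_shift[of i h k g] by simp
    also have "\<dots> = c i"
      using i by (simp add: rot_shift)
    also have "\<dots> = rot k ((g + h) mod k) c j"
      using i by (simp add: rot_shift)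
    finally show ?thesis .
  qed
qed

lemma rot_add: "rot k g (\<lambda>i. b i + v i) = (\<lambda>i. rot k g b i + rot k g v i)"
  by (auto simp: rot_def)

lemma rot_zero: "rot k g (\<lambda>_. 0) = (\<lambda>_. 0)"
  by (auto simp: rot_def)

lemma rot_0: "(\<forall>i\<ge>k. b i = 0) \<Longrightarrow> rot k 0 b = b"
  unfolding rot_def by auto

lemma sum_sum_shift:
  assumes k: "0 < (k::nat)"
  shows "(\<Sum>i<k. \<Sum>j<k. F ((i + g) mod k) ((j + h) mod k)) = (\<Sum>i<k. \<Sum>j<k. F i j)"
proof -
  have "(\<Sum>i<k. \<Sum>j<k. F ((i + g) mod k) ((j + h) mod k)) = (\<Sum>i<k. \<Sum>j<k. F ((i + g) mod k) j)"
    by (rule sum.cong[OF refl]) (rule sum_shift[OF k])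
  also have "\<dots> = (\<Sum>i<k. \<Sum>j<k. F i j)"
    by (rule sum_shift[OF k])
  finally show ?thesis .
qed

lemma mono_exp_rot:
  assumes k: "0 < (k::nat)"
  shows "mono_exp k (rot k g u) (rot k g v)
    = (\<Sum>i<k. \<Sum>j<k. if (j + g) mod k < (i + g) mod k then u i * v j else 0)"
proof -
  have "mono_exp k (rot k g u) (rot k g v) = (\<Sum>i<k. \<Sum>j<k.
      if (j + g) mod k < (i + g) mod k then rot k g u ((i + g) mod k) * rot k g v ((j + g) mod k) else 0)"
    unfolding mono_exp_def by (rule sum_sum_shift[OF k, symmetric])
  also have "\<dots> = (\<Sum>i<k. \<Sum>j<k. if (j + g) mod k < (i + g) mod k then u i * v j else 0)"
    by (intro sum.cong refl) (simp add: rot_shift)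
  finally show ?thesis .
qed

lemma rot_exp_rot:
  assumes k: "0 < (k::nat)"
  shows "rot_exp k g (rot k h c) = (\<Sum>i<k. \<Sum>j<k.
    if (i + h) mod k < (j + h) mod k \<and> (j + (g + h) mod k) mod k < (i + (g + h) mod k) mod k
    then c i * c j else 0)"
proof -
  have "rot_exp k g (rot k h c) = (\<Sum>i<k. \<Sum>j<k.
      if (i + h) mod k < (j + h) mod k \<and> ((j + h) mod k + g) mod k < ((i + h) mod k + g) mod k
      then rot k h c ((i + h) mod k) * rot k h c ((j + h) mod k) else 0)"
    unfolding rot_exp_def by (rule sum_sum_shift[OF k, symmetric])
  also have "\<dots> = (\<Sum>i<k. \<Sum>j<k.
      if (i + h) mod k < (j + h) mod k \<and> (j + (g + h) mod k) mod k < (i + (g + h) mod k) mod k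
      then c i * c j else 0)"
    by (intro sum.cong refl) (simp add: rot_shift shift_shift)
  finally show ?thesis .
qed

definition rot_cross_exp :: "nat \<Rightarrow> nat \<Rightarrow> (nat \<Rightarrow> nat) \<Rightarrow> (nat \<Rightarrow> nat) \<Rightarrow> nat" where
  "rot_cross_exp k g b v = (\<Sum>i<k. \<Sum>j<k.
    if i < j \<and> (j + g) mod k < (i + g) mod k then b i * v j + v i * b j else 0)"

lemma rot_exp_add: "rot_exp k g (\<lambda>i. b i + v i) = rot_exp k g b + rot_exp k g v + rot_cross_exp k g b v"
  unfolding rot_exp_def rot_cross_exp_def
  by (simp add: sum.distrib[symmetric]) (intro sum.cong refl; simp add: algebra_simps)

lemma mono_exp_add_left: "mono_exp k (\<lambda>i. a i + x i) c = mono_exp k a c + mono_exp k x c"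
  unfolding mono_exp_def
  by (simp add: sum.distrib[symmetric]) (intro sum.cong refl; simp add: algebra_simps)

lemma mono_exp_add_right: "mono_exp k a (\<lambda>i. x i + y i) = mono_exp k a x + mono_exp k a y"
  unfolding mono_exp_def
  by (simp add: sum.distrib[symmetric]) (intro sum.cong refl; simp add: algebra_simps)

text \<open>Both parity lemmas compare the double sums termwise, using injectivity of the shifts: each
  pair \<open>(i, j)\<close> contributes an even multiple of its weight, except for terms that pair off under
  \<open>i \<leftrightarrow> j\<close>.\<close>

lemma even_mono_exp_rot_cross:
  assumes k: "0 < (k::nat)"
  shows "even (mono_exp k (rot k g u) (rot k g v) + mono_exp k u v + rot_cross_exp k g u v)"
proof -
  define P where "P x = (x + g) mod k" for x
  define T where "T i j = (if j < i \<or> (i < j \<and> P j < P i) then u i * v j else 0)" for i j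
  have swap: "(\<Sum>i<k. \<Sum>j<k. if i < j \<and> P j < P i then v i * u j else 0)
      = (\<Sum>i<k. \<Sum>j<k. if j < i \<and> P i < P j then u i * v j else 0)"
    by (subst sum.swap) (intro sum.cong refl; simp add: mult.commute)
  have cross: "rot_cross_exp k g u v = (\<Sum>i<k. \<Sum>j<k. if i < j \<and> P j < P i then u i * v j else 0)
      + (\<Sum>i<k. \<Sum>j<k. if i < j \<and> P j < P i then v i * u j else 0)"
    unfolding rot_cross_exp_def P_def by (simp add: sum.distrib[symmetric]) (intro sum.cong refl; simp)
  have "mono_exp k (rot k g u) (rot k g v) + mono_exp k u v + rot_cross_exp k g u v
      = (\<Sum>i<k. \<Sum>j<k. (if P j < P i then u i * v j else 0) + (if j < i then u i * v j else 0)
          + (if i < j \<and> P j < P i then u i * v j else 0) + (if j < i \<and> P i < P j then u i * v j else 0))"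
    unfolding mono_exp_rot[OF k] cross swap unfolding mono_exp_def P_def[symmetric]
    by (simp add: sum.distrib[symmetric] add.assoc)
  also have "\<dots> = (\<Sum>i<k. \<Sum>j<k. 2 * T i j)"
  proof (intro sum.cong refl)
    fix i j assume "i \<in> {..<k}" "j \<in> {..<k}"
    then have "i \<noteq> j \<Longrightarrow> P i \<noteq> P j" unfolding P_def using shift_inj by blast
    then show "(if P j < P i then u i * v j else 0) + (if j < i then u i * v j else 0)
        + (if i < j \<and> P j < P i then u i * v j else 0) + (if j < i \<and> P i < P j then u i * v j else 0)
      = 2 * T i j"
      unfolding T_def by (cases "i < j"; cases "j < i"; cases "P j < P i"; simp)
  qed
  finally show ?thesis by (simp add: sum_distrib_left[symmetric])
qed

lemma even_rot_exp_cocycle: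
  assumes k: "0 < (k::nat)"
  shows "even (rot_exp k ((g + h) mod k) c + rot_exp k h c + rot_exp k g (rot k h c))"
proof -
  define P where "P x = (x + (g + h) mod k) mod k" for x
  define H where "H x = (x + h) mod k" for x
  define R where "R i j = (if i < j \<and> H j < H i \<and> P i < P j then c i * c j else 0)" for i j
  define Q where "Q i j = (if i < j \<and> P j < P i then c i * c j else 0)" for i j
  have "rot_exp k ((g + h) mod k) c + rot_exp k h c + rot_exp k g (rot k h c)
      = (\<Sum>i<k. \<Sum>j<k. (if i < j \<and> P j < P i then c i * c j else 0)
          + (if i < j \<and> H j < H i then c i * c j else 0)
          + (if H i < H j \<and> P j < P i then c i * c j else 0))"
    unfolding rot_exp_rot[OF k] unfolding rot_exp_def P_def H_def sum.distrib[symmetric]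
    by (simp add: mod_add_right_eq)
  also have "\<dots> = (\<Sum>i<k. \<Sum>j<k. 2 * Q i j + R i j + R j i)"
  proof (intro sum.cong refl)
    fix i j assume "i \<in> {..<k}" "j \<in> {..<k}"
    then have "i \<noteq> j \<Longrightarrow> P i \<noteq> P j" "i \<noteq> j \<Longrightarrow> H i \<noteq> H j"
      unfolding P_def H_def using shift_inj by blast+
    then show "(if i < j \<and> P j < P i then c i * c j else 0) + (if i < j \<and> H j < H i then c i * c j else 0)
        + (if H i < H j \<and> P j < P i then c i * c j else 0) = 2 * Q i j + R i j + R j i"
      unfolding Q_def R_def
      by (cases "i < j"; cases "j < i"; cases "P j < P i"; cases "H j < H i"; simp add: mult.commute)
  qed
  also have "\<dots> = 2 * (\<Sum>i<k. \<Sum>j<k. Q i j) + (\<Sum>i<k. \<Sum>j<k. R i j) + (\<Sum>i<k. \<Sum>j<k. R j i)"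
    by (simp add: sum.distrib sum_distrib_left)
  also have "(\<Sum>i<k. \<Sum>j<k. R j i) = (\<Sum>i<k. \<Sum>j<k. R i j)"
    by (rule sum.swap)
  finally show ?thesis by presburger
qed

lemma bsign_cocycle:
  assumes k: "0 < (k::nat)"
  shows "(bsign k p q :: 'a::comm_ring_1) * bsign k (bmon k p q) r = bsign k q r * bsign k p (bmon k q r)"
proof -
  obtain a g b h c l where pqr: "p = (a, g)" "q = (b, h)" "r = (c, l)" by (metis prod.exhaust)
  define v where "v = rot k h c"
  define EL where "EL = mono_exp k a (rot k g b) + rot_exp k g b
    + (mono_exp k a (rot k g v) + mono_exp k (rot k g b) (rot k g v)) + rot_exp k ((g + h) mod k) c"
  define ER where "ER = mono_exp k b v + rot_exp k h c + (mono_exp k a (rot k g b) + mono_exp k a (rot k g v))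
    + (rot_exp k g b + rot_exp k g v + rot_cross_exp k g b v)"
  have L: "(bsign k p q :: 'a) * bsign k (bmon k p q) r = (-1) ^ EL"
    unfolding pqr bsign_def bmon_def EL_def v_def
    by (simp add: mono_sign_eq_power rot_sign_eq_power power_add rot_rot[symmetric] mono_exp_add_left mult_ac)
  have R: "(bsign k q r :: 'a) * bsign k p (bmon k q r) = (-1) ^ ER"
    unfolding pqr bsign_def bmon_def ER_def v_def
    by (simp add: mono_sign_eq_power rot_sign_eq_power power_add rot_add mono_exp_add_right rot_exp_add mult_ac)
  have "EL + ER = 2 * (mono_exp k a (rot k g b) + rot_exp k g b + mono_exp k a (rot k g v))
      + (mono_exp k (rot k g b) (rot k g v) + mono_exp k b v + rot_cross_exp k g b v)
      + (rot_exp k ((g + h) mod k) c + rot_exp k h c + rot_exp k g v)"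
    unfolding EL_def ER_def by simp
  then have "even (EL + ER)"
    using even_mono_exp_rot_cross[OF k] even_rot_exp_cocycle[OF k] unfolding v_def by simp
  then show ?thesis using L R neg_one_power_eq_if_even_add by metis
qed

section \<open>The convolution product\<close>

definition unit_vec :: "mon \<Rightarrow> mon \<Rightarrow> 'a::zero_neq_one" where
  "unit_vec p = (\<lambda>x. if x = p then 1 else 0)"

lemma supp_unit_vec [simp]: "supp (unit_vec p :: mon \<Rightarrow> 'a::zero_neq_one) = {p}"
  unfolding supp_def unit_vec_def by auto

lemma unit_vec_self: "unit_vec p p = 1"
  unfolding unit_vec_def by simp

lemma supp_zero [simp]: "supp (\<lambda>_. 0) = {}"
  unfolding supp_def by simp

lemma supp_sum_subset:
  fixes f :: "'i \<Rightarrow> mon \<Rightarrow> 'a::comm_ring_1"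
  shows "supp (\<lambda>x. \<Sum>i\<in>I. c i * f i x) \<subseteq> (\<Union>i\<in>I. supp (f i))"
  unfolding supp_def by (auto intro: ccontr simp: sum.neutral)

lemma unit_vec_expansion:
  fixes f :: "mon \<Rightarrow> 'a::comm_ring_1"
  assumes "finite (supp f)"
  shows "f = (\<lambda>x. \<Sum>p\<in>supp f. f p * unit_vec p x)"
proof
  fix x
  have "(\<Sum>p\<in>supp f. f p * unit_vec p x) = (\<Sum>p\<in>supp f. if x = p then f p else 0)"
    by (rule sum.cong) (auto simp: unit_vec_def)
  also have "\<dots> = f x" using assms by (simp add: sum.delta supp_def)
  finally show "f x = (\<Sum>p\<in>supp f. f p * unit_vec p x)" by simp
qed

lemma mul_eq_sum_superset:
  assumes "finite A" "supp f \<subseteq> A" "finite B" "supp h \<subseteq> B"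
  shows "mul k f h c = (\<Sum>p\<in>A. \<Sum>q\<in>B. if bmon k p q = c then bsign k p q * f p * h q else 0)"
proof -
  have "mul k f h c = (\<Sum>p\<in>A. \<Sum>q\<in>supp h. if bmon k p q = c then bsign k p q * f p * h q else 0)"
    unfolding mul_def by (rule sum.mono_neutral_left[OF assms(1,2)]) (simp add: supp_def cong: if_cong)
  also have "\<dots> = (\<Sum>p\<in>A. \<Sum>q\<in>B. if bmon k p q = c then bsign k p q * f p * h q else 0)"
    by (rule sum.cong[OF refl], rule sum.mono_neutral_left[OF assms(3,4)]) (auto simp: supp_def)
  finally show ?thesis .
qed

lemma supp_mul_subset: "supp (mul k f h) \<subseteq> (\<lambda>(p, q). bmon k p q) ` (supp f \<times> supp h)"
proof
  fix c assume c: "c \<in> supp (mul k f h)"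
  show "c \<in> (\<lambda>(p, q). bmon k p q) ` (supp f \<times> supp h)"
  proof (rule ccontr)
    assume "c \<notin> (\<lambda>(p, q). bmon k p q) ` (supp f \<times> supp h)"
    then have "mul k f h c = 0" unfolding mul_def
      by (intro sum.neutral ballI) force
    then show False using c by (simp add: supp_def)
  qed
qed

lemma finite_supp_mul:
  "finite (supp f) \<Longrightarrow> finite (supp h) \<Longrightarrow> finite (supp (mul k f h))"
  by (rule finite_subset[OF supp_mul_subset]) auto

lemma mul_unit_vec:
  "mul k (unit_vec p) (unit_vec q) = (\<lambda>x. (bsign k p q :: 'a::comm_ring_1) * unit_vec (bmon k p q) x)"
  unfolding mul_def supp_unit_vec by (auto simp: unit_vec_def)

lemma mul_zero_left: "mul k (\<lambda>_. 0) h = (\<lambda>_. 0)"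
  unfolding mul_def by simp

lemma mul_zero_right: "mul k h (\<lambda>_. 0) = (\<lambda>_. 0)"
  unfolding mul_def by simp

lemma mul_sum_left:
  fixes f :: "'i \<Rightarrow> mon \<Rightarrow> 'a::comm_ring_1"
  assumes I: "finite I" and A: "finite A" and sA: "\<forall>i\<in>I. supp (f i) \<subseteq> A" and H: "finite (supp h)"
  shows "mul k (\<lambda>x. \<Sum>i\<in>I. c i * f i x) h y = (\<Sum>i\<in>I. c i * mul k (f i) h y)"
proof -
  have "supp (\<lambda>x. \<Sum>i\<in>I. c i * f i x) \<subseteq> A" using supp_sum_subset[of c f I] sA by blast
  then have "mul k (\<lambda>x. \<Sum>i\<in>I. c i * f i x) h y = (\<Sum>p\<in>A. \<Sum>q\<in>supp h.
      if bmon k p q = y then bsign k p q * (\<Sum>i\<in>I. c i * f i p) * h q else 0)"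
    by (rule mul_eq_sum_superset[OF A _ H]) simp
  also have "\<dots> = (\<Sum>p\<in>A. \<Sum>q\<in>supp h. \<Sum>i\<in>I.
      c i * (if bmon k p q = y then bsign k p q * f i p * h q else 0))"
    by (intro sum.cong refl) (simp add: sum_distrib_left sum_distrib_right mult_ac)
  also have "\<dots> = (\<Sum>i\<in>I. \<Sum>p\<in>A. \<Sum>q\<in>supp h. c i * (if bmon k p q = y then bsign k p q * f i p * h q else 0))"
    by (subst sum.swap, rule sum.cong[OF refl], rule sum.swap)
  also have "\<dots> = (\<Sum>i\<in>I. c i * mul k (f i) h y)"
    using sA by (simp add: mul_eq_sum_superset[OF A _ H] sum_distrib_left)
  finally show ?thesis .
qed
lemma mul_sum_right:
  fixes f :: "'i \<Rightarrow> mon \<Rightarrow> 'a::comm_ring_1"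
  assumes I: "finite I" and A: "finite A" and sA: "\<forall>i\<in>I. supp (f i) \<subseteq> A" and H: "finite (supp h)"
  shows "mul k h (\<lambda>x. \<Sum>i\<in>I. c i * f i x) y = (\<Sum>i\<in>I. c i * mul k h (f i) y)"
proof -
  have "supp (\<lambda>x. \<Sum>i\<in>I. c i * f i x) \<subseteq> A" using supp_sum_subset[of c f I] sA by blast
  then have "mul k h (\<lambda>x. \<Sum>i\<in>I. c i * f i x) y = (\<Sum>p\<in>supp h. \<Sum>q\<in>A.
      if bmon k p q = y then bsign k p q * h p * (\<Sum>i\<in>I. c i * f i q) else 0)"
    by (rule mul_eq_sum_superset[OF H subset_refl A])
  also have "\<dots> = (\<Sum>p\<in>supp h. \<Sum>q\<in>A. \<Sum>i\<in>I.
      c i * (if bmon k p q = y then bsign k p q * h p * f i q else 0))"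
    by (intro sum.cong refl) (simp add: sum_distrib_left sum_distrib_right mult_ac)
  also have "\<dots> = (\<Sum>i\<in>I. \<Sum>p\<in>supp h. \<Sum>q\<in>A. c i * (if bmon k p q = y then bsign k p q * h p * f i q else 0))"
    by (subst sum.swap, rule sum.cong[OF refl], rule sum.swap)
  also have "\<dots> = (\<Sum>i\<in>I. c i * mul k h (f i) y)"
    using sA by (simp add: mul_eq_sum_superset[OF H _ A] sum_distrib_left)
  finally show ?thesis .
qed

lemma mul_scale_left:
  fixes f h :: "mon \<Rightarrow> 'a::comm_ring_1"
  assumes "finite (supp f)" "finite (supp h)"
  shows "mul k (\<lambda>x. c * f x) h = (\<lambda>y. c * mul k f h y)"
  using mul_sum_left[of "{()}" "supp f" "\<lambda>_. f" h k "\<lambda>_. c"] assms by auto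

lemma mul_scale_right:
  fixes f h :: "mon \<Rightarrow> 'a::comm_ring_1"
  assumes "finite (supp f)" "finite (supp h)"
  shows "mul k h (\<lambda>x. c * f x) = (\<lambda>y. c * mul k h f y)"
  using mul_sum_right[of "{()}" "supp f" "\<lambda>_. f" h k "\<lambda>_. c"] assms by auto

lemma mul_add_left:
  fixes f g h :: "mon \<Rightarrow> 'a::comm_ring_1"
  assumes "finite (supp f)" "finite (supp g)" "finite (supp h)"
  shows "mul k (\<lambda>x. f x + g x) h = (\<lambda>y. mul k f h y + mul k g h y)"
  using mul_sum_left[of UNIV "supp f \<union> supp g" "\<lambda>b. if b then f else g" h k "\<lambda>_. 1"] assms
  by (auto simp: UNIV_bool add.commute)

lemma mul_add_right:
  fixes f g h :: "mon \<Rightarrow> 'a::comm_ring_1"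
  assumes "finite (supp f)" "finite (supp g)" "finite (supp h)"
  shows "mul k h (\<lambda>x. f x + g x) = (\<lambda>y. mul k h f y + mul k h g y)"
  using mul_sum_right[of UNIV "supp f \<union> supp g" "\<lambda>b. if b then f else g" h k "\<lambda>_. 1"] assms
  by (auto simp: UNIV_bool add.commute)

lemma sum_rotate3: "(\<Sum>z\<in>Z. \<Sum>q\<in>Q. \<Sum>r\<in>R. T z q r) = (\<Sum>q\<in>Q. \<Sum>r\<in>R. \<Sum>z\<in>Z. T z q r)"
  by (subst sum.swap, rule sum.cong[OF refl], rule sum.swap)

lemma mul_mul_left_expand:
  fixes f g h :: "mon \<Rightarrow> 'a::comm_ring_1"
  assumes F: "finite (supp f)" and G: "finite (supp g)" and H: "finite (supp h)"
  shows "mul k (mul k f g) h c = (\<Sum>p\<in>supp f. \<Sum>q\<in>supp g. \<Sum>r\<in>supp h.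
      if bmon k (bmon k p q) r = c then bsign k (bmon k p q) r * bsign k p q * f p * g q * h r else 0)"
proof -
  define Z where "Z = (\<lambda>(p, q). bmon k p q) ` (supp f \<times> supp g)"
  have Z: "finite Z" "supp (mul k f g) \<subseteq> Z"
    unfolding Z_def using F G supp_mul_subset[of k f g] by auto
  define T where "T r p q z = (if bmon k p q = z then
      if bmon k z r = c then bsign k z r * bsign k p q * f p * g q * h r else 0 else 0)" for r p q z
  have "mul k (mul k f g) h c
      = (\<Sum>z\<in>Z. \<Sum>r\<in>supp h. if bmon k z r = c then bsign k z r * mul k f g z * h r else 0)"
    by (rule mul_eq_sum_superset[OF Z H subset_refl])
  also have "\<dots> = (\<Sum>z\<in>Z. \<Sum>r\<in>supp h. \<Sum>p\<in>supp f. \<Sum>q\<in>supp g. T r p q z)"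
  proof (intro sum.cong refl)
    fix z r
    show "(if bmon k z r = c then bsign k z r * mul k f g z * h r else 0)
      = (\<Sum>p\<in>supp f. \<Sum>q\<in>supp g. T r p q z)"
      unfolding T_def mul_def
      by (cases "bmon k z r = c") (simp_all add: sum_distrib_left sum_distrib_right mult_ac if_distrib cong: if_cong)
  qed
  also have "\<dots> = (\<Sum>r\<in>supp h. \<Sum>p\<in>supp f. \<Sum>q\<in>supp g. \<Sum>z\<in>Z. T r p q z)"
    by (subst sum.swap, rule sum.cong[OF refl], rule sum_rotate3)
  also have "\<dots> = (\<Sum>p\<in>supp f. \<Sum>q\<in>supp g. \<Sum>r\<in>supp h. \<Sum>z\<in>Z. T r p q z)"
    by (rule sum_rotate3)
  also have "\<dots> = (\<Sum>p\<in>supp f. \<Sum>q\<in>supp g. \<Sum>r\<in>supp h.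
      if bmon k (bmon k p q) r = c then bsign k (bmon k p q) r * bsign k p q * f p * g q * h r else 0)"
  proof (intro sum.cong refl)
    fix p q r assume "p \<in> supp f" "q \<in> supp g"
    then have "bmon k p q \<in> Z" unfolding Z_def by force
    then show "(\<Sum>z\<in>Z. T r p q z)
      = (if bmon k (bmon k p q) r = c then bsign k (bmon k p q) r * bsign k p q * f p * g q * h r else 0)"
      unfolding T_def using Z(1) by (simp add: sum.delta')
  qed
  finally show ?thesis .
qed

lemma mul_mul_right_expand:
  fixes f g h :: "mon \<Rightarrow> 'a::comm_ring_1"
  assumes F: "finite (supp f)" and G: "finite (supp g)" and H: "finite (supp h)"
  shows "mul k f (mul k g h) c = (\<Sum>p\<in>supp f. \<Sum>q\<in>supp g. \<Sum>r\<in>supp h.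
      if bmon k p (bmon k q r) = c then bsign k p (bmon k q r) * bsign k q r * f p * g q * h r else 0)"
proof -
  define Z where "Z = (\<lambda>(q, r). bmon k q r) ` (supp g \<times> supp h)"
  have Z: "finite Z" "supp (mul k g h) \<subseteq> Z"
    unfolding Z_def using G H supp_mul_subset[of k g h] by auto
  define T where "T p q r z = (if bmon k q r = z then
      if bmon k p z = c then bsign k p z * bsign k q r * f p * g q * h r else 0 else 0)" for p q r z
  have "mul k f (mul k g h) c
      = (\<Sum>p\<in>supp f. \<Sum>z\<in>Z. if bmon k p z = c then bsign k p z * f p * mul k g h z else 0)"
    by (rule mul_eq_sum_superset[OF F _ Z]) simp
  also have "\<dots> = (\<Sum>p\<in>supp f. \<Sum>z\<in>Z. \<Sum>q\<in>supp g. \<Sum>r\<in>supp h. T p q r z)"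
  proof (intro sum.cong refl)
    fix p z
    show "(if bmon k p z = c then bsign k p z * f p * mul k g h z else 0)
      = (\<Sum>q\<in>supp g. \<Sum>r\<in>supp h. T p q r z)"
      unfolding T_def mul_def
      by (cases "bmon k p z = c") (simp_all add: sum_distrib_left sum_distrib_right mult_ac if_distrib cong: if_cong)
  qed
  also have "\<dots> = (\<Sum>p\<in>supp f. \<Sum>q\<in>supp g. \<Sum>r\<in>supp h. \<Sum>z\<in>Z. T p q r z)"
    by (rule sum.cong[OF refl], rule sum_rotate3)
  also have "\<dots> = (\<Sum>p\<in>supp f. \<Sum>q\<in>supp g. \<Sum>r\<in>supp h.
      if bmon k p (bmon k q r) = c then bsign k p (bmon k q r) * bsign k q r * f p * g q * h r else 0)"
  proof (intro sum.cong refl)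
    fix p q r assume "q \<in> supp g" "r \<in> supp h"
    then have "bmon k q r \<in> Z" unfolding Z_def by force
    then show "(\<Sum>z\<in>Z. T p q r z)
      = (if bmon k p (bmon k q r) = c then bsign k p (bmon k q r) * bsign k q r * f p * g q * h r else 0)"
      unfolding T_def using Z(1) by (simp add: sum.delta')
  qed
  finally show ?thesis .
qed

lemma bmon_assoc: "bmon k (bmon k p q) r = bmon k p (bmon k q r)"
proof -
  obtain a g b h c l where pqr: "p = (a, g)" "q = (b, h)" "r = (c, l)" by (metis prod.exhaust)
  have "((g + h) mod k + l) mod k = (g + (h + l) mod k) mod k"
    by (metis add.assoc mod_add_left_eq mod_add_right_eq)
  then show ?thesis unfolding pqr bmon_def
    by (simp add: rot_rot[symmetric] rot_add add.assoc)
qed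

lemma mul_assoc:
  fixes f g h :: "mon \<Rightarrow> 'a::comm_ring_1"
  assumes "0 < k" "finite (supp f)" "finite (supp g)" "finite (supp h)"
  shows "mul k (mul k f g) h = mul k f (mul k g h)"
proof
  fix c
  show "mul k (mul k f g) h c = mul k f (mul k g h) c"
    unfolding mul_mul_left_expand[OF assms(2-4)] mul_mul_right_expand[OF assms(2-4)]
  proof (intro sum.cong refl)
    fix p q r
    have "(bsign k p q :: 'a) * bsign k (bmon k p q) r = bsign k q r * bsign k p (bmon k q r)"
      by (rule bsign_cocycle[OF assms(1)])
    then show "(if bmon k (bmon k p q) r = c then bsign k (bmon k p q) r * bsign k p q * f p * g q * h r else 0)
      = (if bmon k p (bmon k q r) = c then bsign k p (bmon k q r) * bsign k q r * f p * g q * h r else 0)"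
      by (simp add: bmon_assoc mult_ac)
  qed
qed

section \<open>Units and the ideal \<open>(e\<^sub>0)\<close>\<close>

abbreviation group_mon :: "nat \<Rightarrow> mon" where
  "group_mon g \<equiv> ((\<lambda>_. 0), g)"

lemma one_eq_unit_vec: "one = unit_vec (group_mon 0)"
  unfolding one_def unit_vec_def by auto

lemma bmon_one_left: "q \<in> Bk k \<Longrightarrow> bmon k (group_mon 0) q = q"
  unfolding bmon_def Bk_def by (auto simp: rot_0)

lemma bmon_one_right: "p \<in> Bk k \<Longrightarrow> bmon k p (group_mon 0) = p"
  unfolding bmon_def Bk_def by (auto simp: rot_zero)

lemma bsign_one_left: "bsign k (group_mon 0) q = 1"
proof -
  obtain b h where q: "q = (b, h)" by fastforce
  have e: "{(i, j). i < j \<and> j < k \<and> j mod k < i mod k} = ({} :: (nat \<times> nat) set)" by auto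
  show ?thesis unfolding q bsign_def mono_sign_def rot_sign_def by (simp add: e)
qed

lemma bsign_one_right: "bsign k p (group_mon 0) = 1"
  unfolding bsign_def mono_sign_def rot_sign_def by (simp add: rot_zero split: prod.split)

lemma mul_one_left:
  fixes f :: "mon \<Rightarrow> 'a::comm_ring_1"
  assumes "f \<in> Alg k"
  shows "mul k one f = f"
proof
  fix c
  have "mul k one f c = (\<Sum>q\<in>supp f. if bmon k (group_mon 0) q = c then bsign k (group_mon 0) q * f q else 0)"
    unfolding mul_def one_eq_unit_vec supp_unit_vec by (simp add: unit_vec_self cong: if_cong)
  also have "\<dots> = (\<Sum>q\<in>supp f. if q = c then f q else 0)"
    using assms by (intro sum.cong refl) (auto simp: Alg_def bmon_one_left bsign_one_left)
  also have "\<dots> = f c" using assms by (simp add: Alg_def sum.delta supp_def)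
  finally show "mul k one f c = f c" .
qed

lemma mul_one_right:
  fixes f :: "mon \<Rightarrow> 'a::comm_ring_1"
  assumes "f \<in> Alg k"
  shows "mul k f one = f"
proof
  fix c
  have "mul k f one c = (\<Sum>p\<in>supp f. if bmon k p (group_mon 0) = c then bsign k p (group_mon 0) * f p else 0)"
    unfolding mul_def one_eq_unit_vec supp_unit_vec by (simp add: unit_vec_self cong: if_cong)
  also have "\<dots> = (\<Sum>p\<in>supp f. if p = c then f p else 0)"
    using assms by (intro sum.cong refl) (auto simp: Alg_def bmon_one_right bsign_one_right)
  also have "\<dots> = f c" using assms by (simp add: Alg_def sum.delta supp_def)
  finally show "mul k f one c = f c" .
qed

lemma bmon_Bk:
  assumes "p \<in> Bk k" "q \<in> Bk k"
  shows "bmon k p q \<in> Bk k"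
proof -
  obtain a g b h where pq: "p = (a, g)" "q = (b, h)" by fastforce
  have "0 < k" using assms(1) unfolding pq Bk_def by auto
  then show ?thesis using assms unfolding pq Bk_def bmon_def by (auto simp: rot_def)
qed

lemma Alg_finite_supp: "f \<in> Alg k \<Longrightarrow> finite (supp f)"
  unfolding Alg_def by simp

lemma Alg_mul:
  assumes "f \<in> Alg k" "g \<in> Alg k"
  shows "mul k f g \<in> Alg k"
proof -
  have F: "finite (supp f)" "finite (supp g)" using assms by (simp_all add: Alg_finite_supp)
  have "supp (mul k f g) \<subseteq> (\<lambda>(p, q). bmon k p q) ` (supp f \<times> supp g)" by (rule supp_mul_subset)
  also have "\<dots> \<subseteq> Bk k" using assms unfolding Alg_def by (auto intro!: bmon_Bk)
  finally show ?thesis unfolding Alg_def using finite_supp_mul[OF F] by simp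
qed

lemma Alg_sum:
  fixes f :: "'i \<Rightarrow> mon \<Rightarrow> 'a::comm_ring_1"
  assumes "finite I" "\<forall>i\<in>I. f i \<in> Alg k"
  shows "(\<lambda>x. \<Sum>i\<in>I. c i * f i x) \<in> Alg k"
proof -
  have "finite (\<Union>i\<in>I. supp (f i))" "(\<Union>i\<in>I. supp (f i)) \<subseteq> Bk k"
    using assms unfolding Alg_def by auto
  then show ?thesis
    using supp_sum_subset[of c f I] unfolding Alg_def by (auto intro: finite_subset)
qed

lemma Alg_add:
  fixes f g :: "mon \<Rightarrow> 'a::comm_ring_1"
  assumes "f \<in> Alg k" "g \<in> Alg k"
  shows "(\<lambda>x. f x + g x) \<in> Alg k"
proof -
  have "supp (\<lambda>x. f x + g x) \<subseteq> supp f \<union> supp g" unfolding supp_def by auto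
  then show ?thesis using assms unfolding Alg_def by (auto intro: finite_subset)
qed

lemma Alg_zero: "(\<lambda>_. 0) \<in> Alg k"
  by (simp add: Alg_def)

lemma unit_vec_Alg: "p \<in> Bk k \<Longrightarrow> (unit_vec p :: mon \<Rightarrow> 'a::zero_neq_one) \<in> Alg k"
  by (simp add: Alg_def)

lemma one_Alg: "0 < k \<Longrightarrow> (one :: mon \<Rightarrow> 'a::zero_neq_one) \<in> Alg k"
  unfolding one_eq_unit_vec by (rule unit_vec_Alg) (simp add: Bk_def)

lemma e0_eq_sum: "(e0 k :: mon \<Rightarrow> 'a::field) = (\<lambda>x. \<Sum>t<k. inverse (of_nat k) * unit_vec (group_mon t) x)"
proof
  fix x
  show "(e0 k x :: 'a) = (\<Sum>t<k. inverse (of_nat k) * unit_vec (group_mon t) x)"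
  proof (cases "\<exists>g<k. x = group_mon g")
    case True
    then obtain g where g: "g < k" "x = group_mon g" by blast
    then have "(\<Sum>t<k. inverse (of_nat k) * unit_vec (group_mon t) x)
        = (\<Sum>t<k. if g = t then inverse (of_nat k) else (0::'a))"
      by (intro sum.cong) (auto simp: unit_vec_def)
    with g show ?thesis by (auto simp: e0_def)
  next
    case False
    then show ?thesis by (auto simp: e0_def unit_vec_def intro!: sum.neutral)
  qed
qed

lemma e0_Alg: "0 < k \<Longrightarrow> (e0 k :: mon \<Rightarrow> 'a::field) \<in> Alg k"
  unfolding e0_eq_sum by (rule Alg_sum) (auto intro!: unit_vec_Alg simp: Bk_def)

lemma gen_ideal_subset_Alg:
  fixes e :: "mon \<Rightarrow> 'a::comm_ring_1"
  assumes "e \<in> Alg k"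
  shows "gen_ideal k e \<subseteq> Alg k"
proof
  fix x assume "x \<in> gen_ideal k e"
  then show "x \<in> Alg k" by induct (auto intro: assms Alg_zero Alg_add Alg_mul)
qed

lemma gen_ideal_scale:
  fixes e :: "mon \<Rightarrow> 'a::comm_ring_1"
  assumes k: "0 < k" and e: "e \<in> Alg k" and x: "x \<in> gen_ideal k e"
  shows "(\<lambda>y. c * x y) \<in> gen_ideal k e"
proof -
  have xA: "x \<in> Alg k" using gen_ideal_subset_Alg[OF e] x by blast
  have oA: "(one :: mon \<Rightarrow> 'a) \<in> Alg k" by (rule one_Alg[OF k])
  have "(\<lambda>y. c * one y) \<in> Alg k" using Alg_sum[of "{()}" "\<lambda>_. one" k "\<lambda>_. c"] oA by simp
  then have "mul k (\<lambda>y. c * one y) x \<in> gen_ideal k e" by (rule gen_ideal.lmul[OF x])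
  also have "mul k (\<lambda>y. c * one y) x = (\<lambda>y. c * mul k one x y)"
    using oA xA by (intro mul_scale_left Alg_finite_supp)
  also have "mul k one x = x" by (rule mul_one_left[OF xA])
  finally show ?thesis .
qed

lemma gen_ideal_sum:
  fixes e :: "mon \<Rightarrow> 'a::comm_ring_1"
  assumes k: "0 < k" and e: "e \<in> Alg k" and I: "finite I" and x: "\<forall>i\<in>I. x i \<in> gen_ideal k e"
  shows "(\<lambda>y. \<Sum>i\<in>I. c i * x i y) \<in> gen_ideal k e"
  using I x
proof (induct I rule: finite_induct)
  case empty
  then show ?case by (simp add: gen_ideal.zero)
next
  case (insert i I)
  then have "(\<lambda>y. c i * x i y) \<in> gen_ideal k e" "(\<lambda>y. \<Sum>i\<in>I. c i * x i y) \<in> gen_ideal k e"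
    by (auto intro: gen_ideal_scale[OF k e])
  from gen_ideal.add[OF this] show ?case using insert by simp
qed

section \<open>The embedding \<open>E\<^sub>m \<rightarrow> E\<^sub>m\<^sub>d\<close>\<close>

definition spread :: "nat \<Rightarrow> (nat \<Rightarrow> nat) \<Rightarrow> (nat \<Rightarrow> nat)" where
  "spread d a = (\<lambda>i. if d dvd i then a (i div d) else 0)"

definition embed_mon :: "nat \<Rightarrow> mon \<Rightarrow> mon" where
  "embed_mon d p = (spread d (fst p), snd p * d)"

definition contract_mon :: "nat \<Rightarrow> mon \<Rightarrow> mon" where
  "contract_mon d c = ((\<lambda>l. fst c (l * d)), snd c div d)"

text \<open>\<open>embed_alg d\<close> is the algebra map induced by \<open>x\<^sub>i \<mapsto> x\<^sub>d\<^sub>i\<close>, \<open>\<sigma> \<mapsto> \<sigma>\<^sup>d\<close>. Its left inverse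
  \<open>restrict_alg d\<close> reads off the coefficients on the image basis; it is not multiplicative, but it
  maps the ideal \<open>(e\<^sub>0)\<close> of \<open>E\<^sub>m\<^sub>d\<close> into that of \<open>E\<^sub>m\<close>.\<close>

definition embed_alg :: "nat \<Rightarrow> (mon \<Rightarrow> 'a::zero) \<Rightarrow> (mon \<Rightarrow> 'a)" where
  "embed_alg d f = (\<lambda>c. if c = embed_mon d (contract_mon d c) then f (contract_mon d c) else 0)"

definition restrict_alg :: "nat \<Rightarrow> (mon \<Rightarrow> 'a) \<Rightarrow> (mon \<Rightarrow> 'a)" where
  "restrict_alg d f = (\<lambda>p. f (embed_mon d p))"

lemma contract_embed_mon: "0 < d \<Longrightarrow> contract_mon d (embed_mon d p) = p"
  unfolding contract_mon_def embed_mon_def spread_def by (cases p) auto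

lemma inj_embed_mon: "0 < d \<Longrightarrow> inj_on (embed_mon d) A"
  by (metis inj_onI contract_embed_mon)

lemma embed_alg_embed_mon: "0 < d \<Longrightarrow> embed_alg d f (embed_mon d p) = f p"
  unfolding embed_alg_def by (simp add: contract_embed_mon)

lemma embed_alg_outside_image: "0 < d \<Longrightarrow> (\<And>p. embed_mon d p \<noteq> c) \<Longrightarrow> embed_alg d f c = 0"
  unfolding embed_alg_def by metis

lemma restrict_embed_alg: "0 < d \<Longrightarrow> restrict_alg d (embed_alg d f) = f"
  unfolding restrict_alg_def by (simp add: embed_alg_embed_mon)

lemma inj_on_embed_alg: "0 < d \<Longrightarrow> inj_on (embed_alg d) S"
  by (rule inj_on_inverseI[where g = "restrict_alg d"]) (simp add: restrict_embed_alg)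

lemma in_embed_mon_image:
  assumes "c = embed_mon d q"
  shows "(\<forall>i. \<not> d dvd i \<longrightarrow> fst c i = 0) \<and> d dvd snd c"
  using assms unfolding embed_mon_def spread_def by auto

lemma supp_embed_alg: "0 < d \<Longrightarrow> supp (embed_alg d f) = embed_mon d ` supp f"
  unfolding supp_def embed_alg_def by (auto simp: contract_embed_mon intro: image_eqI)

lemma embed_alg_sum:
  fixes f :: "'i \<Rightarrow> mon \<Rightarrow> 'a::comm_ring_1"
  shows "embed_alg d (\<lambda>x. \<Sum>i\<in>I. c i * f i x) = (\<lambda>x. \<Sum>i\<in>I. c i * embed_alg d (f i) x)"
  unfolding embed_alg_def by auto

lemma embed_alg_unit_vec: "0 < d \<Longrightarrow> embed_alg d (unit_vec p) = (unit_vec (embed_mon d p) :: mon \<Rightarrow> 'a::zero_neq_one)"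
  unfolding embed_alg_def unit_vec_def by (auto simp: contract_embed_mon)

lemma embed_mon_one: "embed_mon d (group_mon 0) = group_mon 0"
  unfolding embed_mon_def spread_def by auto

lemma embed_alg_one: "0 < d \<Longrightarrow> embed_alg d one = (one :: mon \<Rightarrow> 'a::zero_neq_one)"
  unfolding one_eq_unit_vec by (simp add: embed_alg_unit_vec embed_mon_one)

lemma sum_spread:
  fixes d m :: nat
  assumes d: "0 < d" and z: "\<forall>i<m * d. \<not> d dvd i \<longrightarrow> F i = 0"
  shows "(\<Sum>i<m * d. F i) = (\<Sum>l<m. F (l * d))"
proof -
  have sub: "(\<lambda>l. l * d) ` {..<m} \<subseteq> {..<m * d}" using d by auto
  have "(\<Sum>i<m * d. F i) = (\<Sum>i\<in>(\<lambda>l. l * d) ` {..<m}. F i)"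
  proof (rule sum.mono_neutral_right[OF _ sub])
    show "\<forall>i\<in>{..<m * d} - (\<lambda>l. l * d) ` {..<m}. F i = 0"
      using z d by (auto elim!: dvdE simp: mult.commute)
  qed simp
  also have "\<dots> = (\<Sum>l<m. F (l * d))"
    by (subst sum.reindex) (use d in \<open>auto intro: inj_onI\<close>)
  finally show ?thesis .
qed

lemma mono_exp_spread:
  assumes d: "0 < d"
  shows "mono_exp (m * d) (spread d a) (spread d c) = mono_exp m a c"
proof -
  have "mono_exp (m * d) (spread d a) (spread d c)
      = (\<Sum>l<m. \<Sum>j<m * d. if j < l * d then spread d a (l * d) * spread d c j else 0)"
    unfolding mono_exp_def by (rule sum_spread[OF d]) (auto simp: spread_def intro!: sum.neutral)
  also have "\<dots> = (\<Sum>l<m. \<Sum>l'<m. if l' * d < l * d then spread d a (l * d) * spread d c (l' * d) else 0)"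
    by (rule sum.cong[OF refl], rule sum_spread[OF d]) (auto simp: spread_def)
  also have "\<dots> = mono_exp m a c"
    unfolding mono_exp_def spread_def using d by (simp cong: if_cong)
  finally show ?thesis .
qed

lemma rot_exp_spread:
  assumes d: "0 < d"
  shows "rot_exp (m * d) (g * d) (spread d b) = rot_exp m g b"
proof -
  have sh: "(x * d + g * d) mod (m * d) = ((x + g) mod m) * d" for x
    using mod_mult_mult2[of "x + g" d m] by (simp add: algebra_simps)
  have "rot_exp (m * d) (g * d) (spread d b) = (\<Sum>l<m. \<Sum>j<m * d.
      if l * d < j \<and> (j + g * d) mod (m * d) < (l * d + g * d) mod (m * d)
      then spread d b (l * d) * spread d b j else 0)"
    unfolding rot_exp_def by (rule sum_spread[OF d]) (auto simp: spread_def intro!: sum.neutral)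
  also have "\<dots> = (\<Sum>l<m. \<Sum>l'<m.
      if l * d < l' * d \<and> (l' * d + g * d) mod (m * d) < (l * d + g * d) mod (m * d)
      then spread d b (l * d) * spread d b (l' * d) else 0)"
    by (rule sum.cong[OF refl], rule sum_spread[OF d]) (auto simp: spread_def)
  also have "\<dots> = rot_exp m g b"
    unfolding rot_exp_def sh spread_def using d by (simp cong: if_cong)
  finally show ?thesis .
qed

lemma rot_spread:
  assumes d: "0 < d" and g: "g < m"
  shows "rot (m * d) (g * d) (spread d b) = spread d (rot m g b)"
proof
  fix j
  show "rot (m * d) (g * d) (spread d b) j = spread d (rot m g b) j"
  proof (cases "j < m * d")
    case False
    then have "\<not> (d dvd j \<and> j div d < m)" using d
      by (metis dvd_mult_div_cancel mult.commute mult_less_cancel2)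
    then show ?thesis using False unfolding rot_def spread_def by auto
  next
    case True
    define x where "x = j + (m - g) * d"
    have "g * d \<le> m * d" using g by simp
    then have "x = j + m * d - g * d" unfolding x_def by (simp add: diff_mult_distrib)
    then have lhs: "rot (m * d) (g * d) (spread d b) j = spread d b (x mod (m * d))"
      unfolding rot_def using True g by (simp add: mult.commute)
    show ?thesis
    proof (cases "d dvd j")
      case False
      then have "\<not> d dvd (x mod (m * d))" unfolding x_def by (simp add: dvd_mod_iff dvd_add_left_iff)
      then show ?thesis unfolding lhs using False by (simp add: spread_def)
    next
      case True
      then obtain l where l: "j = l * d" by (auto simp: dvd_def mult.commute)
      have "l < m" using \<open>j < m * d\<close> l d by simp
      moreover have "x mod (m * d) = ((l + m - g) mod m) * d"
        unfolding x_def l using g mod_mult_mult2[of "l + m - g" d m] by (simp add: algebra_simps diff_mult_distrib)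
      ultimately show ?thesis unfolding lhs unfolding l using d g by (simp add: spread_def rot_def)
    qed
  qed
qed

lemma embed_mon_Bk:
  assumes d: "0 < d" and p: "p \<in> Bk m"
  shows "embed_mon d p \<in> Bk (m * d)"
proof -
  obtain a g where pp: "p = (a, g)" by fastforce
  have "\<forall>i\<ge>m * d. spread d a i = 0"
    using p d unfolding pp Bk_def spread_def by (auto elim!: dvdE simp: mult.commute)
  then show ?thesis using p d unfolding pp embed_mon_def Bk_def by simp
qed

lemma bmon_embed_mon:
  assumes d: "0 < d" and p: "p \<in> Bk m"
  shows "bmon (m * d) (embed_mon d p) (embed_mon d q) = embed_mon d (bmon m p q)"
proof -
  obtain a g b h where pq: "p = (a, g)" "q = (b, h)" by fastforce
  have g: "g < m" using p unfolding pq Bk_def by auto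
  have "(g * d + h * d) mod (m * d) = ((g + h) mod m) * d"
    using mod_mult_mult2[of "g + h" d m] by (simp add: algebra_simps)
  moreover have "(\<lambda>i. spread d a i + spread d (rot m g b) i) = spread d (\<lambda>i. a i + rot m g b i)"
    unfolding spread_def by auto
  ultimately show ?thesis
    unfolding pq embed_mon_def bmon_def using rot_spread[OF d g] by simp
qed

lemma bsign_embed_mon:
  assumes d: "0 < d" and p: "p \<in> Bk m"
  shows "bsign (m * d) (embed_mon d p) (embed_mon d q) = (bsign m p q :: 'a::ring_1)"
proof -
  obtain a g b h where pq: "p = (a, g)" "q = (b, h)" by fastforce
  have g: "g < m" using p unfolding pq Bk_def by auto
  show ?thesis unfolding pq embed_mon_def bsign_def
    by (simp add: rot_spread[OF d g] mono_sign_eq_power rot_sign_eq_power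
        mono_exp_spread[OF d] rot_exp_spread[OF d])
qed

lemma embed_alg_mul:
  fixes f g :: "mon \<Rightarrow> 'a::comm_ring_1"
  assumes d: "0 < d" and f: "f \<in> Alg m"
  shows "embed_alg d (mul m f g) = mul (m * d) (embed_alg d f) (embed_alg d g)"
proof
  fix c
  have B: "supp f \<subseteq> Bk m" using f by (simp add: Alg_def)
  have inj: "inj_on (embed_mon d) A" for A by (rule inj_embed_mon[OF d])
  have "mul (m * d) (embed_alg d f) (embed_alg d g) c = (\<Sum>p\<in>supp f. \<Sum>q\<in>supp g.
      if bmon (m * d) (embed_mon d p) (embed_mon d q) = c
      then bsign (m * d) (embed_mon d p) (embed_mon d q) * embed_alg d f (embed_mon d p) * embed_alg d g (embed_mon d q)
      else 0)"
    unfolding mul_def supp_embed_alg[OF d]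
    by (subst sum.reindex[OF inj], unfold comp_def, rule sum.cong[OF refl],
        subst sum.reindex[OF inj], unfold comp_def, rule refl)
  also have "\<dots> = (\<Sum>p\<in>supp f. \<Sum>q\<in>supp g.
      if embed_mon d (bmon m p q) = c then bsign m p q * f p * g q else 0)"
  proof (intro sum.cong refl)
    fix p q assume "p \<in> supp f"
    then have "p \<in> Bk m" using B by blast
    then show "(if bmon (m * d) (embed_mon d p) (embed_mon d q) = c
        then bsign (m * d) (embed_mon d p) (embed_mon d q) * embed_alg d f (embed_mon d p) * embed_alg d g (embed_mon d q)
        else 0) = (if embed_mon d (bmon m p q) = c then bsign m p q * f p * g q else 0)"
      by (simp add: bmon_embed_mon[OF d] bsign_embed_mon[OF d] embed_alg_embed_mon[OF d])
  qed
  also have "\<dots> = embed_alg d (mul m f g) c"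
  proof (cases "\<exists>r. c = embed_mon d r")
    case True
    then obtain r where r: "c = embed_mon d r" by blast
    have "embed_mon d (bmon m p q) = c \<longleftrightarrow> bmon m p q = r" for p q
      unfolding r by (metis contract_embed_mon[OF d])
    then show ?thesis unfolding r embed_alg_embed_mon[OF d] mul_def by presburger
  next
    case False
    then have "\<And>p. embed_mon d p \<noteq> c" by auto
    then show ?thesis by (simp add: embed_alg_outside_image[OF d])
  qed
  finally show "embed_alg d (mul m f g) c = mul (m * d) (embed_alg d f) (embed_alg d g) c" by simp
qed

lemma embed_alg_Alg:
  assumes d: "0 < d" and f: "f \<in> Alg m"
  shows "embed_alg d f \<in> Alg (m * d)"
proof -
  have "finite (supp f)" "supp f \<subseteq> Bk m" using f by (auto simp: Alg_def)
  then show ?thesis by (auto simp: Alg_def supp_embed_alg[OF d] intro!: embed_mon_Bk[OF d])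
qed

lemma embed_alg_prodl:
  fixes xs :: "(mon \<Rightarrow> 'a::comm_ring_1) list"
  assumes d: "0 < d" and m: "0 < m" and xs: "set xs \<subseteq> Alg m"
  shows "embed_alg d (prodl m xs) = prodl (m * d) (map (embed_alg d) xs)"
  using xs
proof (induct xs)
  case Nil
  then show ?case by (simp add: prodl_def embed_alg_one[OF d])
next
  case (Cons x xs)
  then have "embed_alg d (mul m x (prodl m xs)) = mul (m * d) (embed_alg d x) (embed_alg d (prodl m xs))"
    by (intro embed_alg_mul[OF d]) auto
  with Cons show ?case by (simp add: prodl_def)
qed

lemma embed_alg_filt:
  assumes d: "0 < d" and m: "0 < m" and F: "F \<subseteq> (Alg m :: (mon \<Rightarrow> 'a::comm_ring_1) set)"
    and s: "s \<in> filt m F n"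
  shows "embed_alg d s \<in> filt (m * d) (embed_alg d ` F) n"
proof -
  obtain T c where s_eq: "s = (\<lambda>p. \<Sum>t\<in>T. c t * t p)" and T: "finite T"
    and T_sub: "T \<subseteq> {prodl m xs | xs. set xs \<subseteq> F \<and> length xs \<le> n}"
    using s unfolding filt_def lin_span_def by auto
  have "embed_alg d s = (\<lambda>p. \<Sum>t'\<in>embed_alg d ` T. c (restrict_alg d t') * t' p)"
    unfolding s_eq embed_alg_sum by (simp add: sum.reindex[OF inj_on_embed_alg[OF d]] restrict_embed_alg[OF d])
  moreover have "embed_alg d ` T \<subseteq> {prodl (m * d) ys | ys. set ys \<subseteq> embed_alg d ` F \<and> length ys \<le> n}"
  proof
    fix t' assume "t' \<in> embed_alg d ` T"
    then obtain xs where xs: "set xs \<subseteq> F" "length xs \<le> n" "t' = embed_alg d (prodl m xs)"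
      using T_sub by auto
    then have "t' = prodl (m * d) (map (embed_alg d) xs)" using embed_alg_prodl[OF d m] F by auto
    with xs show "t' \<in> {prodl (m * d) ys | ys. set ys \<subseteq> embed_alg d ` F \<and> length ys \<le> n}"
      by (intro CollectI exI[of _ "map (embed_alg d) xs"]) auto
  qed
  ultimately show ?thesis
    unfolding filt_def lin_span_def using T
    by (intro CollectI exI[of _ "embed_alg d ` T"] exI[of _ "\<lambda>t'. c (restrict_alg d t')"]) auto
qed

section \<open>Restriction maps \<open>(e\<^sub>0)\<close> into \<open>(e\<^sub>0)\<close>\<close>

lemma bsign_group_mon: "bsign k (group_mon g) (group_mon t) = (1::'a::comm_ring_1)"
  unfolding bsign_def mono_sign_def rot_sign_def by (simp add: rot_zero)

lemma bmon_group_mon: "bmon k (group_mon g) (group_mon t) = group_mon ((g + t) mod k)"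
  unfolding bmon_def by (simp add: rot_zero)

lemma mul_e0_right_eq_sum:
  assumes "finite (supp f)"
  shows "mul k f (e0 k) y = (\<Sum>t<k. inverse (of_nat k) * mul k f (unit_vec (group_mon t)) y :: 'a::field)"
  unfolding e0_eq_sum
  by (rule mul_sum_right[where A = "group_mon ` {..<k}"]) (auto simp: assms)

lemma group_mon_mul_e0:
  assumes k: "0 < k"
  shows "mul k (unit_vec (group_mon g)) (e0 k) = (e0 k :: mon \<Rightarrow> 'a::field)"
proof
  fix y
  have "mul k (unit_vec (group_mon g)) (e0 k) y = (\<Sum>t<k. inverse (of_nat k) * unit_vec (group_mon ((t + g) mod k)) y)"
    by (simp add: mul_e0_right_eq_sum mul_unit_vec bsign_group_mon bmon_group_mon add.commute)
  also have "\<dots> = e0 k y"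
    unfolding e0_eq_sum by (rule sum_shift[OF k, of "\<lambda>t. inverse (of_nat k) * unit_vec (group_mon t) y"])
  finally show "mul k (unit_vec (group_mon g)) (e0 k) y = e0 k y" .
qed

lemma e0_mul_group_mon:
  assumes k: "0 < k"
  shows "mul k (e0 k) (unit_vec (group_mon h)) = (e0 k :: mon \<Rightarrow> 'a::field)"
proof
  fix y
  have "mul k (e0 k) (unit_vec (group_mon h)) y
      = (\<Sum>t<k. inverse (of_nat k) * mul k (unit_vec (group_mon t)) (unit_vec (group_mon h)) y)"
    unfolding e0_eq_sum by (rule mul_sum_left[where A = "group_mon ` {..<k}"]) auto
  also have "\<dots> = (\<Sum>t<k. inverse (of_nat k) * unit_vec (group_mon ((t + h) mod k)) y)"
    by (simp add: mul_unit_vec bsign_group_mon bmon_group_mon)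
  also have "\<dots> = e0 k y"
    unfolding e0_eq_sum by (rule sum_shift[OF k, of "\<lambda>t. inverse (of_nat k) * unit_vec (group_mon t) y"])
  finally show "mul k (e0 k) (unit_vec (group_mon h)) y = e0 k y" .
qed

lemma unit_vec_split_left:
  "mul k (unit_vec (a, 0)) (unit_vec (group_mon g)) = (unit_vec (a, g mod k) :: mon \<Rightarrow> 'a::comm_ring_1)"
proof -
  have "bsign k (a, 0) (group_mon g) = (1::'a)"
    unfolding bsign_def mono_sign_def rot_sign_def by (simp add: rot_zero)
  moreover have "bmon k (a, 0) (group_mon g) = (a, g mod k)"
    unfolding bmon_def by (simp add: rot_zero)
  ultimately show ?thesis by (simp add: mul_unit_vec)
qed

text \<open>Moving \<open>\<sigma>\<^sup>h\<close> to the left of \<open>x\<^sup>b\<close> costs a sign, which is why a scalar \<open>s\<close> appears.\<close>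

lemma unit_vec_split_right:
  assumes "(b, h) \<in> Bk k"
  obtains b' s where "(b', 0) \<in> Bk k"
    and "(unit_vec (b, h) :: mon \<Rightarrow> 'a::comm_ring_1) = (\<lambda>x. s * mul k (unit_vec (group_mon h)) (unit_vec (b', 0)) x)"
proof -
  have hk: "h < k" and bs: "\<forall>i\<ge>k. b i = 0" using assms unfolding Bk_def by auto
  define b' where "b' = rot k (k - h) b"
  have b'B: "(b', 0) \<in> Bk k" using hk unfolding b'_def Bk_def by (auto simp: rot_def)
  have "rot k h b' = rot k ((h + (k - h)) mod k) b" unfolding b'_def by (simp add: rot_rot)
  then have "rot k h b' = b" using hk rot_0[OF bs] by simp
  then have bm: "bmon k (group_mon h) (b', 0) = (b, h)" unfolding bmon_def using hk by simp
  define s :: 'a where "s = rot_sign k h b'"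
  have "bsign k (group_mon h) (b', 0) = s"
    unfolding bsign_def s_def mono_sign_def by simp
  moreover have "s * s = 1"
    unfolding s_def rot_sign_def by (simp add: power_mult_distrib[symmetric])
  ultimately have "unit_vec (b, h) = (\<lambda>x. s * mul k (unit_vec (group_mon h)) (unit_vec (b', 0)) x)"
    by (simp add: mul_unit_vec bm mult.assoc[symmetric])
  with b'B that show ?thesis by blast
qed

lemma sandwich_e0_eq_sum:
  "mul k (mul k (unit_vec p) (e0 k)) (unit_vec q) = (\<lambda>y. \<Sum>t<k. inverse (of_nat k)
    * mul k (mul k (unit_vec p) (unit_vec (group_mon t))) (unit_vec q) y :: 'a::field)"
proof
  fix y
  have "mul k (unit_vec p) (e0 k) = (\<lambda>y. \<Sum>t<k. inverse (of_nat k) * mul k (unit_vec p) (unit_vec (group_mon t)) y :: 'a)"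
    by (rule ext, rule mul_e0_right_eq_sum) simp
  then show "mul k (mul k (unit_vec p) (e0 k)) (unit_vec q) y = (\<Sum>t<k. inverse (of_nat k)
      * mul k (mul k (unit_vec p) (unit_vec (group_mon t))) (unit_vec q) y :: 'a)"
    by (simp, intro mul_sum_left[where A = "\<Union>t<k. supp (mul k (unit_vec p) (unit_vec (group_mon t)) :: mon \<Rightarrow> 'a)"])
      (auto intro: finite_supp_mul)
qed

lemma mul_unit_vec_pure_group_pure:
  "mul k (mul k (unit_vec (a, 0)) (unit_vec (group_mon t))) (unit_vec (b, 0))
    = (\<lambda>x. (bsign k (a, t mod k) (b, 0) :: 'a::comm_ring_1) * unit_vec (bmon k (a, t mod k) (b, 0)) x)"
  by (simp only: unit_vec_split_left) (simp add: mul_unit_vec)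

lemma restrict_alg_outside_image:
  assumes "\<And>r. embed_mon d r \<noteq> z"
  shows "restrict_alg d (\<lambda>x. s * unit_vec z x) = (\<lambda>_. 0::'a::comm_ring_1)"
  using assms unfolding restrict_alg_def unit_vec_def by auto

lemma bmon_in_embed_image:
  assumes b: "(b, 0) \<in> Bk (m * d)" and t: "t < m * d"
    and img: "bmon (m * d) (a, t) (b, 0) = embed_mon d r"
  shows "d dvd t" "\<forall>i. \<not> d dvd i \<longrightarrow> a i = 0" "\<forall>i. \<not> d dvd i \<longrightarrow> b i = 0"
proof -
  have z: "\<And>i. \<not> d dvd i \<Longrightarrow> a i + rot (m * d) t b i = 0" and dt: "d dvd t"
    using in_embed_mon_image[OF img] t by (simp_all add: bmon_def)
  show "d dvd t" by (rule dt)
  show "\<forall>i. \<not> d dvd i \<longrightarrow> a i = 0" using z by simp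
  show "\<forall>i. \<not> d dvd i \<longrightarrow> b i = 0"
  proof (intro allI impI)
    fix i assume i: "\<not> d dvd i"
    show "b i = 0"
    proof (cases "i < m * d")
      case True
      have "d dvd (i + t) mod (m * d) \<longleftrightarrow> d dvd i"
        using dt by (simp add: dvd_mod_iff dvd_add_left_iff)
      then have "a ((i + t) mod (m * d)) + rot (m * d) t b ((i + t) mod (m * d)) = 0"
        using i z by blast
      then show ?thesis using rot_shift[OF True] by simp
    next
      case False
      then show ?thesis using b unfolding Bk_def by simp
    qed
  qed
qed

lemma restrict_alg_sum:
  "restrict_alg d (\<lambda>y. \<Sum>t\<in>T. c t * f t y) = (\<lambda>y. \<Sum>t\<in>T. c t * restrict_alg d (f t) y)"
  unfolding restrict_alg_def ..

lemma restrict_sandwich_term_vanish: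
  assumes b: "(b, 0) \<in> Bk (m * d)" and t: "t < m * d"
    and not_spread: "\<not> (d dvd t \<and> (\<forall>i. \<not> d dvd i \<longrightarrow> a i = 0) \<and> (\<forall>i. \<not> d dvd i \<longrightarrow> b i = 0))"
  shows "restrict_alg d (mul (m * d) (mul (m * d) (unit_vec (a, 0)) (unit_vec (group_mon t))) (unit_vec (b, 0)))
    = (\<lambda>_. 0 :: 'a::comm_ring_1)"
  unfolding mul_unit_vec_pure_group_pure
proof (rule restrict_alg_outside_image)
  fix r
  show "embed_mon d r \<noteq> bmon (m * d) (a, t mod (m * d)) (b, 0)"
  proof
    assume "embed_mon d r = bmon (m * d) (a, t mod (m * d)) (b, 0)"
    with t have "bmon (m * d) (a, t) (b, 0) = embed_mon d r" by simp
    from bmon_in_embed_image[OF b t this] not_spread show False by blast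
  qed
qed

lemma restrict_sandwich_e0_vanish:
  assumes b: "(b, 0) \<in> Bk (m * d)"
    and not_spread: "\<not> ((\<forall>i. \<not> d dvd i \<longrightarrow> a i = 0) \<and> (\<forall>i. \<not> d dvd i \<longrightarrow> b i = 0))"
  shows "restrict_alg d (mul (m * d) (mul (m * d) (unit_vec (a, 0)) (e0 (m * d))) (unit_vec (b, 0)))
    = (\<lambda>_. 0 :: 'a::field)"
  unfolding sandwich_e0_eq_sum restrict_alg_sum
proof (intro ext sum.neutral ballI)
  fix y t assume "t \<in> {..<m * d}"
  then have vanish: "restrict_alg d (mul (m * d) (mul (m * d) (unit_vec (a, 0)) (unit_vec (group_mon t)))
      (unit_vec (b, 0))) = (\<lambda>_. 0 :: 'a)"
    using not_spread by (intro restrict_sandwich_term_vanish[OF b]) auto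
  show "inverse (of_nat (m * d)) * restrict_alg d
      (mul (m * d) (mul (m * d) (unit_vec (a, 0)) (unit_vec (group_mon t))) (unit_vec (b, 0))) y = (0::'a)"
    unfolding vanish by simp
qed

lemma restrict_sandwich_e0_spread:
  assumes d: "0 < d" and m: "0 < m" and a: "(a, 0) \<in> Bk m" and b: "(b, 0) \<in> Bk m"
  shows "restrict_alg d (mul (m * d) (mul (m * d) (unit_vec (spread d a, 0)) (e0 (m * d))) (unit_vec (spread d b, 0)))
    = (\<lambda>y. inverse (of_nat d) * mul m (mul m (unit_vec (a, 0)) (e0 m)) (unit_vec (b, 0)) y :: 'a::field_char_0)"
proof -
  define Y :: "nat \<Rightarrow> mon \<Rightarrow> 'a" where
    "Y s = mul m (mul m (unit_vec (a, 0)) (unit_vec (group_mon s))) (unit_vec (b, 0))" for s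
  have restrict_term: "restrict_alg d (mul (m * d) (mul (m * d) (unit_vec (spread d a, 0)) (unit_vec (group_mon t)))
      (unit_vec (spread d b, 0))) = (if d dvd t then Y (t div d) else (\<lambda>_. 0))" if t: "t < m * d" for t
  proof (cases "d dvd t")
    case True
    then obtain s where s: "t = s * d" by (auto simp: dvd_def mult.commute)
    have "unit_vec (spread d a, 0) = embed_alg d (unit_vec (a, 0) :: mon \<Rightarrow> 'a)"
      "unit_vec (group_mon t) = embed_alg d (unit_vec (group_mon s) :: mon \<Rightarrow> 'a)"
      "unit_vec (spread d b, 0) = embed_alg d (unit_vec (b, 0) :: mon \<Rightarrow> 'a)"
      unfolding embed_alg_unit_vec[OF d] embed_mon_def s by (simp_all add: spread_def)
    moreover have "s < m" using t d s by simp
    then have "(unit_vec (a, 0) :: mon \<Rightarrow> 'a) \<in> Alg m" "(unit_vec (group_mon s) :: mon \<Rightarrow> 'a) \<in> Alg m"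
      using a by (simp_all add: unit_vec_Alg Bk_def)
    then have "mul (m * d) (mul (m * d) (embed_alg d (unit_vec (a, 0)))
        (embed_alg d (unit_vec (group_mon s)))) (embed_alg d (unit_vec (b, 0))) = embed_alg d (Y s)"
      unfolding Y_def by (simp add: embed_alg_mul[OF d] Alg_mul)
    ultimately show ?thesis
      using True s d by (simp add: restrict_embed_alg)
  next
    case False
    have "(spread d b, 0) \<in> Bk (m * d)"
      using embed_mon_Bk[OF d b] by (simp add: embed_mon_def)
    with False t show ?thesis by (simp add: restrict_sandwich_term_vanish)
  qed
  have "restrict_alg d (mul (m * d) (mul (m * d) (unit_vec (spread d a, 0)) (e0 (m * d))) (unit_vec (spread d b, 0)))
      = (\<lambda>y. \<Sum>t<m * d. inverse (of_nat (m * d)) * (if d dvd t then Y (t div d) y else 0))"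
    unfolding sandwich_e0_eq_sum restrict_alg_sum
    by (intro ext sum.cong refl) (auto simp: restrict_term)
  also have "\<dots> = (\<lambda>y. \<Sum>s<m. inverse (of_nat (m * d)) * Y s y)"
    using d by (subst sum_spread) simp_all
  also have "\<dots> = (\<lambda>y. inverse (of_nat d) * mul m (mul m (unit_vec (a, 0)) (e0 m)) (unit_vec (b, 0)) y)"
    unfolding sandwich_e0_eq_sum Y_def by (simp add: sum_distrib_left mult.assoc mult.commute)
  finally show ?thesis .
qed

lemma restrict_sandwich_e0_pure:
  assumes d: "0 < d" and m: "0 < m" and a: "(a, 0) \<in> Bk (m * d)" and b: "(b, 0) \<in> Bk (m * d)"
  shows "restrict_alg d (mul (m * d) (mul (m * d) (unit_vec (a, 0)) (e0 (m * d))) (unit_vec (b, 0)))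
    \<in> gen_ideal m (e0 m :: mon \<Rightarrow> 'a::field_char_0)"
proof (cases "(\<forall>i. \<not> d dvd i \<longrightarrow> a i = 0) \<and> (\<forall>i. \<not> d dvd i \<longrightarrow> b i = 0)")
  case True
  define a' b' where "a' = (\<lambda>l. a (l * d))" and "b' = (\<lambda>l. b (l * d))"
  have spread: "a = spread d a'" "b = spread d b'"
    using True unfolding a'_def b'_def spread_def by (auto simp: fun_eq_iff)
  have Bk': "(a', 0) \<in> Bk m" "(b', 0) \<in> Bk m"
    using a b m d unfolding a'_def b'_def Bk_def by auto
  have "mul m (mul m (unit_vec (a', 0)) (e0 m)) (unit_vec (b', 0)) \<in> gen_ideal m (e0 m :: mon \<Rightarrow> 'a)"
    by (intro gen_ideal.rmul gen_ideal.lmul gen_ideal.gen unit_vec_Alg Bk')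
  then show ?thesis
    unfolding spread restrict_sandwich_e0_spread[OF d m Bk']
    by (rule gen_ideal_scale[OF m e0_Alg[OF m]])
next
  case False
  then show ?thesis
    by (simp add: restrict_sandwich_e0_vanish[OF b] gen_ideal.zero)
qed

lemma restrict_sandwich_e0_unit_vec:
  assumes d: "0 < d" and m: "0 < m" and p: "p \<in> Bk (m * d)" and q: "q \<in> Bk (m * d)"
  shows "restrict_alg d (mul (m * d) (mul (m * d) (unit_vec p) (e0 (m * d))) (unit_vec q))
    \<in> gen_ideal m (e0 m :: mon \<Rightarrow> 'a::field_char_0)"
proof -
  define n where "n = m * d"
  have n: "0 < n" using m d by (simp add: n_def)
  obtain a g b h where pq: "p = (a, g)" "q = (b, h)" by fastforce
  have g: "g < n" and a: "(a, 0) \<in> Bk n" using p n unfolding pq n_def Bk_def by auto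
  obtain b' s where b': "(b', 0) \<in> Bk n"
    and q_split: "(unit_vec (b, h) :: mon \<Rightarrow> 'a) = (\<lambda>x. s * mul n (unit_vec (group_mon h)) (unit_vec (b', 0)) x)"
    using unit_vec_split_right[of b h n] q unfolding pq n_def by blast
  have e0F: "finite (supp (e0 n :: mon \<Rightarrow> 'a))" by (rule Alg_finite_supp[OF e0_Alg[OF n]])
  define X :: "mon \<Rightarrow> 'a" where "X = mul n (unit_vec (a, 0)) (e0 n)"
  have XF: "finite (supp X)" unfolding X_def using e0F by (intro finite_supp_mul) simp_all
  have "mul n (unit_vec (a, g)) (e0 n) = mul n (mul n (unit_vec (a, 0)) (unit_vec (group_mon g))) (e0 n :: mon \<Rightarrow> 'a)"
    using g by (simp add: unit_vec_split_left)
  also have "\<dots> = X"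
    unfolding X_def using e0F by (simp add: mul_assoc[OF n] group_mon_mul_e0[OF n])
  finally have left: "mul n (unit_vec p) (e0 n) = X" unfolding pq .
  have "mul n X (unit_vec (group_mon h)) = X"
    unfolding X_def using e0F by (simp add: mul_assoc[OF n] e0_mul_group_mon[OF n])
  then have "mul n X (unit_vec q) = (\<lambda>y. s * mul n X (unit_vec (b', 0)) y)"
    unfolding pq q_split using XF by (simp add: mul_scale_right finite_supp_mul mul_assoc[OF n, symmetric])
  then have "restrict_alg d (mul n (mul n (unit_vec p) (e0 n)) (unit_vec q))
      = (\<lambda>y. s * restrict_alg d (mul n (mul n (unit_vec (a, 0)) (e0 n)) (unit_vec (b', 0))) y)"
    unfolding left by (simp add: X_def restrict_alg_def)
  also have "\<dots> \<in> gen_ideal m (e0 m)"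
    using a b' unfolding n_def by (intro gen_ideal_scale[OF m e0_Alg[OF m]] restrict_sandwich_e0_pure[OF d m])
  finally show ?thesis unfolding n_def .
qed

lemma restrict_sandwich_e0:
  assumes d: "0 < d" and m: "0 < m" and v: "v \<in> Alg (m * d)" and w: "w \<in> Alg (m * d)"
  shows "restrict_alg d (mul (m * d) (mul (m * d) v (e0 (m * d))) w) \<in> gen_ideal m (e0 m :: mon \<Rightarrow> 'a::field_char_0)"
proof -
  define n where "n = m * d"
  have n: "0 < n" using m d by (simp add: n_def)
  have vF: "finite (supp v)" and wF: "finite (supp w)" and vB: "supp v \<subseteq> Bk n" and wB: "supp w \<subseteq> Bk n"
    using v w by (auto simp: Alg_def n_def)
  have e0F: "finite (supp (e0 n :: mon \<Rightarrow> 'a))" by (rule Alg_finite_supp[OF e0_Alg[OF n]])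
  have peF: "finite (supp (mul n (unit_vec p) (e0 n) :: mon \<Rightarrow> 'a))" for p
    using e0F by (intro finite_supp_mul) simp_all
  define U where "U p = (\<lambda>y. \<Sum>q\<in>supp w. w q * restrict_alg d (mul n (mul n (unit_vec p) (e0 n)) (unit_vec q)) y)" for p
  have ve: "mul n v (e0 n) = (\<lambda>y. \<Sum>p\<in>supp v. v p * mul n (unit_vec p) (e0 n) y)"
    by (subst unit_vec_expansion[OF vF], rule ext, rule mul_sum_left[OF vF vF _ e0F]) simp
  have vew: "mul n (mul n v (e0 n)) w y = (\<Sum>p\<in>supp v. v p * mul n (mul n (unit_vec p) (e0 n)) w y)" for y
    unfolding ve using vF peF wF
    by (intro mul_sum_left[where A = "\<Union>p\<in>supp v. supp (mul n (unit_vec p) (e0 n) :: mon \<Rightarrow> 'a)"]) auto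
  have pew: "mul n (mul n (unit_vec p) (e0 n)) w y = (\<Sum>q\<in>supp w. w q * mul n (mul n (unit_vec p) (e0 n)) (unit_vec q) y)"
    for p y by (subst unit_vec_expansion[OF wF], rule mul_sum_right[OF wF wF _ peF]) simp
  have "restrict_alg d (mul n (mul n v (e0 n)) w) = (\<lambda>y. \<Sum>p\<in>supp v. v p * U p y)"
    unfolding restrict_alg_def U_def vew pew by (simp add: sum_distrib_left)
  also have "\<dots> \<in> gen_ideal m (e0 m)"
  proof (intro gen_ideal_sum[OF m e0_Alg[OF m] vF] ballI)
    fix p assume p: "p \<in> supp v"
    show "U p \<in> gen_ideal m (e0 m)"
      unfolding U_def using p vB wB unfolding n_def
      by (intro gen_ideal_sum[OF m e0_Alg[OF m] wF] ballI restrict_sandwich_e0_unit_vec[OF d m]) auto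
  qed
  finally show ?thesis unfolding n_def .
qed

text \<open>The claim is strengthened to all two-sided multiples \<open>v x w\<close> so that the induction over
  \<open>gen_ideal\<close> goes through: restriction is not multiplicative, so closure under
  \<open>lmul\<close>/\<open>rmul\<close> cannot be transported directly.\<close>

lemma restrict_sandwich_gen_ideal:
  assumes d: "0 < d" and m: "0 < m" and x: "x \<in> gen_ideal (m * d) (e0 (m * d))"
  shows "\<forall>v w. v \<in> Alg (m * d) \<longrightarrow> w \<in> Alg (m * d) \<longrightarrow>
    restrict_alg d (mul (m * d) (mul (m * d) v x) w) \<in> gen_ideal m (e0 m :: mon \<Rightarrow> 'a::field_char_0)"
proof -
  have n: "0 < m * d" using m d by simp
  have Alg: "y \<in> Alg (m * d)" if "y \<in> gen_ideal (m * d) (e0 (m * d))" for y :: "mon \<Rightarrow> 'a"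
    using that gen_ideal_subset_Alg[OF e0_Alg[OF n]] by blast
  from x show ?thesis
  proof induct
    case gen
    then show ?case using restrict_sandwich_e0[OF d m] by blast
  next
    case zero
    show ?case by (simp add: mul_zero_left mul_zero_right restrict_alg_def gen_ideal.zero)
  next
    case (add x y)
    show ?case
    proof (intro allI impI)
      fix v w :: "mon \<Rightarrow> 'a" assume v: "v \<in> Alg (m * d)" and w: "w \<in> Alg (m * d)"
      have "mul (m * d) (mul (m * d) v (\<lambda>p. x p + y p)) w
          = (\<lambda>p. mul (m * d) (mul (m * d) v x) w p + mul (m * d) (mul (m * d) v y) w p)"
        using Alg[OF add(1)] Alg[OF add(3)] v w
        by (simp add: Alg_finite_supp finite_supp_mul mul_add_left mul_add_right)
      then show "restrict_alg d (mul (m * d) (mul (m * d) v (\<lambda>p. x p + y p)) w) \<in> gen_ideal m (e0 m)"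
        using add v w by (simp add: restrict_alg_def gen_ideal.add)
    qed
  next
    case (lmul x u)
    show ?case
    proof (intro allI impI)
      fix v w :: "mon \<Rightarrow> 'a" assume v: "v \<in> Alg (m * d)" and w: "w \<in> Alg (m * d)"
      have "mul (m * d) v (mul (m * d) u x) = mul (m * d) (mul (m * d) v u) x"
        using Alg[OF lmul(1)] v lmul(3) by (simp add: mul_assoc[OF n] Alg_finite_supp)
      then show "restrict_alg d (mul (m * d) (mul (m * d) v (mul (m * d) u x)) w) \<in> gen_ideal m (e0 m)"
        using lmul(2) Alg_mul[OF v lmul(3)] w by auto
    qed
  next
    case (rmul x u)
    show ?case
    proof (intro allI impI)
      fix v w :: "mon \<Rightarrow> 'a" assume v: "v \<in> Alg (m * d)" and w: "w \<in> Alg (m * d)"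
      have "mul (m * d) (mul (m * d) v (mul (m * d) x u)) w = mul (m * d) (mul (m * d) v x) (mul (m * d) u w)"
        using Alg[OF rmul(1)] v w rmul(3) by (simp add: mul_assoc[OF n] Alg_finite_supp finite_supp_mul)
      then show "restrict_alg d (mul (m * d) (mul (m * d) v (mul (m * d) x u)) w) \<in> gen_ideal m (e0 m)"
        using rmul(2) v Alg_mul[OF rmul(3) w] by auto
    qed
  qed
qed

lemma restrict_gen_ideal:
  assumes d: "0 < d" and m: "0 < m" and x: "x \<in> gen_ideal (m * d) (e0 (m * d))"
  shows "restrict_alg d x \<in> gen_ideal m (e0 m :: mon \<Rightarrow> 'a::field_char_0)"
proof -
  have n: "0 < m * d" using m d by simp
  have "x \<in> Alg (m * d)" using x gen_ideal_subset_Alg[OF e0_Alg[OF n]] by blast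
  then have "mul (m * d) (mul (m * d) one x) one = x"
    by (simp add: mul_one_left mul_one_right)
  then show ?thesis
    using restrict_sandwich_gen_ideal[OF d m x] one_Alg[OF n] by metis
qed

section \<open>Growth and Gelfand--Kirillov dimension\<close>

lemma growth_mono:
  assumes le: "\<And>j. d1 j \<le> d2 j"
  shows "growth d1 \<le> growth d2"
  unfolding growth_def
proof (rule Limsup_mono, rule eventually_sequentiallyI[of 2])
  fix j :: nat assume "2 \<le> j"
  then have lj: "0 < ln (real j)" by simp
  show "(case d1 j of enat x \<Rightarrow> ereal (ln (real x) / ln (real j)) | \<infinity> \<Rightarrow> \<infinity>)
      \<le> (case d2 j of enat x \<Rightarrow> ereal (ln (real x) / ln (real j)) | \<infinity> \<Rightarrow> \<infinity>)"
  proof (cases "d2 j")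
    case (enat b)
    then obtain a where a: "d1 j = enat a" "a \<le> b" using le[of j] by (cases "d1 j") auto
    have "ln (real a) \<le> ln (real b)" \<comment> \<open>\<open>ln 0 = 0\<close>, so \<open>a = 0\<close> is not covered by monotonicity of \<open>ln\<close>\<close>
    proof (cases "a = 0")
      case True
      then show ?thesis by (cases "b = 0") auto
    qed (use a in simp)
    then show ?thesis using a enat lj by (simp add: divide_right_mono)
  qed simp
qed

lemma indep_mod_embed_alg:
  fixes S :: "(mon \<Rightarrow> 'a::field_char_0) set"
  assumes d: "0 < d" and m: "0 < m" and S: "indep_mod (gen_ideal m (e0 m)) S"
  shows "indep_mod (gen_ideal (m * d) (e0 (m * d))) (embed_alg d ` S)"
  unfolding indep_mod_def
proof (intro allI impI)
  fix c assume c: "(\<lambda>p. \<Sum>s\<in>embed_alg d ` S. c s * s p) \<in> gen_ideal (m * d) (e0 (m * d))"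
  have "restrict_alg d (\<lambda>p. \<Sum>s\<in>embed_alg d ` S. c s * s p) = (\<lambda>p. \<Sum>s\<in>S. c (embed_alg d s) * s p)"
    by (simp add: restrict_alg_sum sum.reindex[OF inj_on_embed_alg[OF d]] restrict_embed_alg[OF d])
  with restrict_gen_ideal[OF d m c]
  have "(\<lambda>p. \<Sum>s\<in>S. c (embed_alg d s) * s p) \<in> gen_ideal m (e0 m)" by simp
  with S show "\<forall>s\<in>embed_alg d ` S. c s = 0"
    unfolding indep_mod_def by auto
qed

lemma qdim_embed_alg_mono:
  fixes W :: "(mon \<Rightarrow> 'a::field_char_0) set"
  assumes d: "0 < d" and m: "0 < m" and W: "\<And>s. s \<in> W \<Longrightarrow> embed_alg d s \<in> W'"
  shows "qdim (gen_ideal m (e0 m)) W \<le> qdim (gen_ideal (m * d) (e0 (m * d))) W'"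
  unfolding qdim_def
proof (rule SUP_mono)
  fix S assume S: "S \<in> {S. finite S \<and> S \<subseteq> W \<and> indep_mod (gen_ideal m (e0 m)) S}"
  have "card (embed_alg d ` S) = card S" by (rule card_image[OF inj_on_embed_alg[OF d]])
  moreover have "finite (embed_alg d ` S)" "embed_alg d ` S \<subseteq> W'"
    "indep_mod (gen_ideal (m * d) (e0 (m * d))) (embed_alg d ` S)"
    using S W indep_mod_embed_alg[OF d m] by blast+
  ultimately show "\<exists>S'\<in>{S. finite S \<and> S \<subseteq> W' \<and> indep_mod (gen_ideal (m * d) (e0 (m * d))) S}.
      enat (card S) \<le> enat (card S')"
    by (intro bexI[of _ "embed_alg d ` S"]) simp_all
qed

lemma GKdim_E_mono_mult:
  assumes m: "0 < m" and d: "0 < d"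
  shows "GKdim_E TYPE('a::field_char_0) m \<le> GKdim_E TYPE('a) (m * d)"
  unfolding GKdim_E_def GKdim_quot_def
proof (rule SUP_mono)
  fix F assume F: "F \<in> {F. finite F \<and> F \<subseteq> (Alg m :: (mon \<Rightarrow> 'a) set)}"
  have "growth (\<lambda>j. qdim (gen_ideal m (e0 m :: mon \<Rightarrow> 'a)) (filt m F j))
      \<le> growth (\<lambda>j. qdim (gen_ideal (m * d) (e0 (m * d) :: mon \<Rightarrow> 'a)) (filt (m * d) (embed_alg d ` F) j))"
    using F by (intro growth_mono qdim_embed_alg_mono[OF d m] embed_alg_filt[OF d m]) simp_all
  moreover have "embed_alg d ` F \<in> {F. finite F \<and> F \<subseteq> (Alg (m * d) :: (mon \<Rightarrow> 'a) set)}"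
    using F embed_alg_Alg[OF d] by blast
  ultimately show "\<exists>F'\<in>{F. finite F \<and> F \<subseteq> (Alg (m * d) :: (mon \<Rightarrow> 'a) set)}.
      growth (\<lambda>j. qdim (gen_ideal m (e0 m :: mon \<Rightarrow> 'a)) (filt m F j))
      \<le> growth (\<lambda>j. qdim (gen_ideal (m * d) (e0 (m * d) :: mon \<Rightarrow> 'a)) (filt (m * d) F' j))"
    by blast
qed

theorem lemma3p7:
  fixes m n :: nat
  assumes alg_closed: "\<forall>p :: 'a::field_char_0 poly. degree p > 0 \<longrightarrow> (\<exists>x. poly p x = 0)"
    and "2 \<le> m" and "2 \<le> n" and "m dvd n"
  shows "GKdim_E TYPE('a) n \<ge> GKdim_E TYPE('a) m"
proof -
  obtain d where n: "n = m * d" using \<open>m dvd n\<close> by blast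
  have "0 < m" using \<open>2 \<le> m\<close> by simp
  moreover have "0 < d" using \<open>2 \<le> n\<close> unfolding n by (cases d) auto
  ultimately show ?thesis unfolding n by (rule GKdim_E_mono_mult)
qed

end
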